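(* Let $G$, $\Sigma_o$, a supervisor $S$ realized by $H$, secret initial states $X_{sec}\subseteq X_0$ and vulnerable events $\Sigma_v\subseteq\Sigma_o$ be given, and let $M^s$ be the simplified All Attack Structure. There exists an IS-detectable attacker (i.e., $S/G$ is IS-attackable) if and only if there exists a single attack structure $m$ of $M^s$ whose induced strategy $A_m$ is IS-detectable.
   Context: A plant is a finite automaton $G=(X,\Sigma,\delta,X_0)$ with partial transition function $\delta$ (extended to strings), initial states $X_0\subseteq X$; $\mathcal{L}(G,x_0)=\{s:\delta(x_0,s)\text{ defined}\}$, $\mathcal{L}(G)=\bigcup_{x_0\in X_0}\mathcal{L}(G,x_0)$. $\Sigma=\Sigma_o\dot\cup\Sigma_{uo}=\Sigma_c\dot\cup\Sigma_{uc}$, $P:\Sigma^*\to\Sigma_o^*$ the natural projection. A supervisor is $S:P(\mathcal{L}(G))\to\Gamma=\{\gamma\subseteq\Sigma:\Sigma_{uc}\subseteq\gamma\}$, realized by a deterministic automaton $H=(Z,\Sigma,\xi,z_0)$ with $\xi(z,\sigma)\neq z\Rightarrow\sigma\in\Sigma_o$ and $\Delta_H(\xi(z_0,s))=S(P(s))$ for $s\in\mathcal{L}(S/G)$ ($\Delta_H(z)$ = events defined at $z$). For any map $T$ from observable strings to subsets of $\Sigma$, $\mathcal{L}(T/G,x_0)$ is defined by $\epsilon\in\mathcal{L}(T/G,x_0)$ and $s\sigma\in\mathcal{L}(T/G,x_0)$ iff $s\in\mathcal{L}(T/G,x_0)$, $s\sigma\in\mathcal{L}(G,x_0)$, $\sigma\in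 T(P(s))$; $\mathcal{L}(T/G)=\bigcup_{x_0}\mathcal{L}(T/G,x_0)$. Estimates: $\mathcal{E}^C_{T/G}(\alpha)=\{\delta(x_0,s):x_0\in X_0,s\in\mathcal{L}(T/G,x_0),P(s)=\alpha\}$, $\mathcal{E}^I_{T/G}(\alpha)=\{x_0\in X_0:\exists s\in\mathcal{L}(T/G,x_0),P(s)=\alpha\}$. An attacker is a map $A:P(\mathcal{L}(G))\to\Sigma_o\cup\{\epsilon\}$ with $A(\epsilon)=\epsilon$ and, for $\alpha\sigma\in P(\mathcal{L}(G))$, $A(\alpha\sigma)=\sigma$ if $\sigma\notin\Sigma_v$, $A(\alpha\sigma)\in\Sigma_v\cup\{\epsilon\}$ if $\sigma\in\Sigma_v$. It induces $g_A(\epsilon)=\epsilon$, $g_A(\alpha\sigma)=g_A(\alpha)A(\alpha\sigma)$ and $S_A=S\circ g_A$. $A$ is stealthy along $\alpha\in P(\mathcal{L}(S_A/G))$ if $\mathcal{E}^C_{S/G}(g_A(\alpha))\neq\emptyset$. $A$ is IS-detectable if there exist $\alpha\in\Sigma_o^*$, $\sigma\in\Sigma_o$ with $\alpha\sigma\in P(\mathcal{L}(S_A/G))$ such that $A$ is stealthy along $\alpha$ and $\mathcal{E}^I_{S_A/G}(\alpha\sigma)\subseteq X_{sec}$. Operators: for $q\subseteq X$, $\gamma\subseteq\Sigma$, $\sigma\in\Sigma_o$: $\textsf{UR}_\gamma(q)=\{\delta(x,s):x\in q,s\in(\Sigma_{uo}\cap\gamma)^*\}$, $\textsf{NX}_\sigma(q)=\{\delta(x,\sigma):x\in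 q\}$, $\textsf{NX}_\epsilon(q)=q$, $\mathcal{O}(q,\gamma)=\{\sigma\in\Sigma_o\cap\gamma:\exists x\in q,\exists w\in(\Sigma_{uo}\cap\gamma)^*,\delta(x,w\sigma)\text{ defined}\}$. Augmented system: states $\tilde X\subseteq X_0\times X$, $\tilde X_0=\{(x_0,x_0)\}$, $\tilde\delta((x_0,x),\sigma)=(x_0,\delta(x,\sigma))$; $\widetilde{\textsf{UR}},\widetilde{\textsf{NX}},\mathcal{O}(\tilde q,\gamma)$ defined analogously; $I(\tilde q)=\{x_0:(x_0,x)\in\tilde q\text{ for some }x\}$. All Attack Structure (AAS): for $\sigma\in\Sigma_o$, $\hat\sigma$ is a doctored copy, $\hat\epsilon$ an erasure symbol; $\mathcal{V}(\sigma)=\{\hat\sigma':\sigma'\in\Sigma_v\}\cup\{\hat\epsilon\}$ if $\sigma\in\Sigma_v$, else $\{\hat\sigma\}$. $M=(Q,\Sigma_M,f,q_0)$, $\Sigma_M=\Sigma_o\cup\{\hat\sigma:\sigma\in\Sigma_o\}\cup\{\hat\epsilon\}$, $q_0=(X_0,\tilde X_0,z_0)$, states reachable from $q_0$, $Q=Q_e\dot\cup Q_a$: environment states $(q,\tilde q,z)$ with $q\subseteq X,\tilde q\subseteq\tilde X,z\in Z\cup\{z_{\textsf{att}}\}$ ($z_{\textsf{att}}$ new, $\Delta_H(z_{\textsf{att}})=\emptyset$); attack states $(q,\tilde q,z,\sigma)$. At $(q,\tilde q,z)$ enabled events are $\mathcal{O}(\tilde q,\Delta_H(z))$ if $z\in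 Z$, none if $z=z_{\textsf{att}}$, with $f((q,\tilde q,z),\sigma)=(q,\tilde q,z,\sigma)$. At $(q,\tilde q,z,\sigma)$ enabled events are $\mathcal{V}(\sigma)$, with $f((q,\tilde q,z,\sigma),\hat\sigma_a)=(q',\tilde q',z')$, $q'=\textsf{NX}_{\sigma_a}(\textsf{UR}_{\Delta_H(z)}(q))$, $\tilde q'=\widetilde{\textsf{NX}}_\sigma(\widetilde{\textsf{UR}}_{\Delta_H(z)}(\tilde q))$, $z'=\xi(z,\sigma_a)$ if $q'\ne\emptyset$ (with $\xi(z,\epsilon)=z$), $z'=z_{\textsf{att}}$ otherwise. Extended strings are those leading from $q_0$ to an environment state; for $h=\sigma_1\hat\sigma_{a1}\cdots\sigma_n\hat\sigma_{an}$, $\textsf{obs}(h)=\sigma_1\cdots\sigma_n$. Environment state $(q,\tilde q,z)$ is positive detected if $I(\tilde q)\subseteq X_{sec}$, negative detected if $I(\tilde q)\cap X_{sec}=\emptyset$ (together: $Q_{det}$); it is undetectable (set $Q_{ud}$) if $I(\tilde q)\cap X_{sec}\neq\emptyset$ and for every $(x_0,x)\in\widetilde{\textsf{UR}}_{\Delta_H(z)}(\tilde q)$ with $x_0\in X_{sec}$ there exists $(x_0',x)\in\widetilde{\textsf{UR}}_{\Delta_H(z)}(\tilde q)$ with $x_0'\notin X_{sec}$. The simplified AAS $M^s$ is the part of $M$ reachable from $q_0$ after removing all outgoing transitions from states in $Q_{det}\cup Q_{ud}$. A single attack structure (SAS) of $M^s$ is a sub-automaton $m$ of $M^s$ (states reachable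 from $q_0$, transitions a subset of those of $M^s$) such that every attack state of $m$ has exactly one enabled event in $m$, and every environment state of $m$ has in $m$ all the enabled events it has in $M^s$. For an observation $\alpha$, $\textsf{obs}^{-1}_m(\alpha)$ denotes the (at most one) extended string $h$ of $m$ with $\textsf{obs}(h)=\alpha$. The induced strategy $A_m$ is: $A_m(\epsilon)=\epsilon$; for nonempty $\alpha\in P(\mathcal{L}(G))$, if $\textsf{obs}^{-1}_m(\alpha)$ exists and its last event is $\hat\sigma_a$ then $A_m(\alpha)=\sigma_a$ (with $\sigma_a=\epsilon$ for $\hat\epsilon$); otherwise $A_m(\alpha)$ is the last event of $\alpha$. *)

theory Defs
  imports Main
begin

text \<open>Strings are lists; the alphabet Sigma is the (finite) event type.
  Partial transition functions are option-valued.\<close>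

definition deltas :: "('s \<Rightarrow> 'e \<Rightarrow> 's option) \<Rightarrow> 's \<Rightarrow> 'e list \<Rightarrow> 's option" where
  "deltas \<delta> x s = foldl (\<lambda>acc \<sigma>. Option.bind acc (\<lambda>y. \<delta> y \<sigma>)) (Some x) s"

definition proj :: "'e set \<Rightarrow> 'e list \<Rightarrow> 'e list" where
  "proj So s = filter (\<lambda>e. e \<in> So) s"

definition langG :: "('x \<Rightarrow> 'e \<Rightarrow> 'x option) \<Rightarrow> 'x set \<Rightarrow> 'e list set" where
  "langG \<delta> X0 = {s. \<exists>x0\<in>X0. deltas \<delta> x0 s \<noteq> None}"

text \<open>Closed-loop language L(T/G, x0) for a map T from observations to event sets.\<close>
inductive_set clang :: "('x \<Rightarrow> 'e \<Rightarrow> 'x option) \<Rightarrow> 'e set \<Rightarrow> ('e list \<Rightarrow> 'e set) \<Rightarrow> 'x \<Rightarrow> 'e list set"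
  for \<delta> So T x0 where
  clang_Nil: "[] \<in> clang \<delta> So T x0"
| clang_snoc: "s \<in> clang \<delta> So T x0 \<Longrightarrow> deltas \<delta> x0 (s @ [\<sigma>]) \<noteq> None \<Longrightarrow> \<sigma> \<in> T (proj So s)
    \<Longrightarrow> s @ [\<sigma>] \<in> clang \<delta> So T x0"

definition clangU :: "('x \<Rightarrow> 'e \<Rightarrow> 'x option) \<Rightarrow> 'x set \<Rightarrow> 'e set \<Rightarrow> ('e list \<Rightarrow> 'e set) \<Rightarrow> 'e list set" where
  "clangU \<delta> X0 So T = (\<Union>x0\<in>X0. clang \<delta> So T x0)"

definition estC :: "('x \<Rightarrow> 'e \<Rightarrow> 'x option) \<Rightarrow> 'x set \<Rightarrow> 'e set \<Rightarrow> ('e list \<Rightarrow> 'e set) \<Rightarrow> 'e list \<Rightarrow> 'x set" where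
  "estC \<delta> X0 So T \<alpha> = {x. \<exists>x0\<in>X0. \<exists>s\<in>clang \<delta> So T x0. proj So s = \<alpha> \<and> deltas \<delta> x0 s = Some x}"

definition estI :: "('x \<Rightarrow> 'e \<Rightarrow> 'x option) \<Rightarrow> 'x set \<Rightarrow> 'e set \<Rightarrow> ('e list \<Rightarrow> 'e set) \<Rightarrow> 'e list \<Rightarrow> 'x set" where
  "estI \<delta> X0 So T \<alpha> = {x0\<in>X0. \<exists>s\<in>clang \<delta> So T x0. proj So s = \<alpha>}"

text \<open>Supervisor S : P(L(G)) -> Gamma (values outside P(L(G)) are irrelevant).\<close>
definition is_supervisor :: "('x \<Rightarrow> 'e \<Rightarrow> 'x option) \<Rightarrow> 'x set \<Rightarrow> 'e set \<Rightarrow> 'e set \<Rightarrow> ('e list \<Rightarrow> 'e set) \<Rightarrow> bool" where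
  "is_supervisor \<delta> X0 So Suc_ev S = (\<forall>\<alpha>\<in>proj So ` langG \<delta> X0. Suc_ev \<subseteq> S \<alpha>)"

definition DeltaH :: "('z \<Rightarrow> 'e \<Rightarrow> 'z option) \<Rightarrow> 'z \<Rightarrow> 'e set" where
  "DeltaH \<xi> z = {\<sigma>. \<xi> z \<sigma> \<noteq> None}"

definition realizes :: "('x \<Rightarrow> 'e \<Rightarrow> 'x option) \<Rightarrow> 'x set \<Rightarrow> 'e set \<Rightarrow> ('e list \<Rightarrow> 'e set)
    \<Rightarrow> ('z \<Rightarrow> 'e \<Rightarrow> 'z option) \<Rightarrow> 'z \<Rightarrow> bool" where
  "realizes \<delta> X0 So S \<xi> z0 =
     ((\<forall>z \<sigma> z'. \<xi> z \<sigma> = Some z' \<longrightarrow> z' \<noteq> z \<longrightarrow> \<sigma> \<in> So) \<and>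
      (\<forall>s\<in>clangU \<delta> X0 So S. \<exists>z. deltas \<xi> z0 s = Some z \<and> DeltaH \<xi> z = S (proj So s)))"

text \<open>An attacker output in Sigma_o \<union> {epsilon} is an option (None = epsilon).\<close>
definition is_attacker :: "('x \<Rightarrow> 'e \<Rightarrow> 'x option) \<Rightarrow> 'x set \<Rightarrow> 'e set \<Rightarrow> 'e set \<Rightarrow> ('e list \<Rightarrow> 'e option) \<Rightarrow> bool" where
  "is_attacker \<delta> X0 So Sv A =
     (A [] = None \<and>
      (\<forall>\<alpha> \<sigma>. \<alpha> @ [\<sigma>] \<in> proj So ` langG \<delta> X0 \<longrightarrow>
          (\<sigma> \<notin> Sv \<longrightarrow> A (\<alpha> @ [\<sigma>]) = Some \<sigma>) \<and>
          (\<sigma> \<in> Sv \<longrightarrow> A (\<alpha> @ [\<sigma>]) \<in> Some ` Sv \<union> {None})))"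

definition opt_list :: "'a option \<Rightarrow> 'a list" where
  "opt_list o' = (case o' of None \<Rightarrow> [] | Some a \<Rightarrow> [a])"

definition gA :: "('e list \<Rightarrow> 'e option) \<Rightarrow> 'e list \<Rightarrow> 'e list" where
  "gA A \<alpha> = concat (map (\<lambda>i. opt_list (A (take (Suc i) \<alpha>))) [0..<length \<alpha>])"

definition SA :: "('e list \<Rightarrow> 'e set) \<Rightarrow> ('e list \<Rightarrow> 'e option) \<Rightarrow> 'e list \<Rightarrow> 'e set" where
  "SA S A = S \<circ> gA A"

definition stealthy_along :: "('x \<Rightarrow> 'e \<Rightarrow> 'x option) \<Rightarrow> 'x set \<Rightarrow> 'e set \<Rightarrow> ('e list \<Rightarrow> 'e set)
    \<Rightarrow> ('e list \<Rightarrow> 'e option) \<Rightarrow> 'e list \<Rightarrow> bool" where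
  "stealthy_along \<delta> X0 So S A \<alpha> = (estC \<delta> X0 So S (gA A \<alpha>) \<noteq> {})"

definition IS_detectable :: "('x \<Rightarrow> 'e \<Rightarrow> 'x option) \<Rightarrow> 'x set \<Rightarrow> 'e set \<Rightarrow> ('e list \<Rightarrow> 'e set)
    \<Rightarrow> 'x set \<Rightarrow> ('e list \<Rightarrow> 'e option) \<Rightarrow> bool" where
  "IS_detectable \<delta> X0 So S Xsec A =
     (\<exists>\<alpha> \<sigma>. \<sigma> \<in> So \<and> \<alpha> @ [\<sigma>] \<in> proj So ` clangU \<delta> X0 So (SA S A) \<and>
        stealthy_along \<delta> X0 So S A \<alpha> \<and> estI \<delta> X0 So (SA S A) (\<alpha> @ [\<sigma>]) \<subseteq> Xsec)"

definition IS_attackable :: "('x \<Rightarrow> 'e \<Rightarrow> 'x option) \<Rightarrow> 'x set \<Rightarrow> 'e set \<Rightarrow> 'e set \<Rightarrow> ('e list \<Rightarrow> 'e set)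
    \<Rightarrow> 'x set \<Rightarrow> bool" where
  "IS_attackable \<delta> X0 So Sv S Xsec =
     (\<exists>A. is_attacker \<delta> X0 So Sv A \<and> IS_detectable \<delta> X0 So S Xsec A)"

text \<open>Generic over the state type, so they serve both G and the augmented system.\<close>
definition UR :: "('s \<Rightarrow> 'e \<Rightarrow> 's option) \<Rightarrow> 'e set \<Rightarrow> 'e set \<Rightarrow> 's set \<Rightarrow> 's set" where
  "UR \<delta> So \<gamma> q = {x'. \<exists>x\<in>q. \<exists>s. set s \<subseteq> (- So) \<inter> \<gamma> \<and> deltas \<delta> x s = Some x'}"

definition NX :: "('s \<Rightarrow> 'e \<Rightarrow> 's option) \<Rightarrow> 'e \<Rightarrow> 's set \<Rightarrow> 's set" where
  "NX \<delta> \<sigma> q = {x'. \<exists>x\<in>q. \<delta> x \<sigma> = Some x'}"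

definition NXo :: "('s \<Rightarrow> 'e \<Rightarrow> 's option) \<Rightarrow> 'e option \<Rightarrow> 's set \<Rightarrow> 's set" where
  "NXo \<delta> a q = (case a of None \<Rightarrow> q | Some \<sigma> \<Rightarrow> NX \<delta> \<sigma> q)"

definition Oen :: "('s \<Rightarrow> 'e \<Rightarrow> 's option) \<Rightarrow> 'e set \<Rightarrow> 's set \<Rightarrow> 'e set \<Rightarrow> 'e set" where
  "Oen \<delta> So q \<gamma> = {\<sigma>\<in>So \<inter> \<gamma>. \<exists>x\<in>q. \<exists>w. set w \<subseteq> (- So) \<inter> \<gamma> \<and> deltas \<delta> x (w @ [\<sigma>]) \<noteq> None}"

text \<open>Augmented system transition on X0 x X.\<close>
definition aug :: "('x \<Rightarrow> 'e \<Rightarrow> 'x option) \<Rightarrow> ('x \<times> 'x) \<Rightarrow> 'e \<Rightarrow> ('x \<times> 'x) option" where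
  "aug \<delta> p \<sigma> = map_option (\<lambda>y. (fst p, y)) (\<delta> (snd p) \<sigma>)"

definition Iof :: "('x \<times> 'x) set \<Rightarrow> 'x set" where
  "Iof qt = fst ` qt"

text \<open>The supervisor component is 'z option: Some z for z in Z, None for z_att.\<close>
datatype ('x, 'z, 'e) mstate =
    Env "'x set" "('x \<times> 'x) set" "'z option"
  | Att "'x set" "('x \<times> 'x) set" "'z option" 'e

text \<open>Ob sigma: observable event; Hat sigma: doctored copy; HatEps: erasure.\<close>
datatype 'e mevent = Ob 'e | Hat 'e | HatEps

fun is_env :: "('x, 'z, 'e) mstate \<Rightarrow> bool" where
  "is_env (Env _ _ _) = True"
| "is_env (Att _ _ _ _) = False"

fun is_att :: "('x, 'z, 'e) mstate \<Rightarrow> bool" where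
  "is_att (Env _ _ _) = False"
| "is_att (Att _ _ _ _) = True"

fun DeltaZ :: "('z \<Rightarrow> 'e \<Rightarrow> 'z option) \<Rightarrow> 'z option \<Rightarrow> 'e set" where
  "DeltaZ \<xi> None = {}"
| "DeltaZ \<xi> (Some z) = DeltaH \<xi> z"

definition Vset :: "'e set \<Rightarrow> 'e \<Rightarrow> 'e mevent set" where
  "Vset Sv \<sigma> = (if \<sigma> \<in> Sv then Hat ` Sv \<union> {HatEps} else {Hat \<sigma>})"

fun hat_val :: "'e mevent \<Rightarrow> 'e option" where
  "hat_val (Hat a) = Some a"
| "hat_val HatEps = None"
| "hat_val (Ob a) = Some a"

definition xi_opt :: "('z \<Rightarrow> 'e \<Rightarrow> 'z option) \<Rightarrow> 'z \<Rightarrow> 'e option \<Rightarrow> 'z option" where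
  "xi_opt \<xi> z a = (case a of None \<Rightarrow> Some z | Some b \<Rightarrow> \<xi> z b)"

fun aas_step :: "('x \<Rightarrow> 'e \<Rightarrow> 'x option) \<Rightarrow> 'e set \<Rightarrow> 'e set \<Rightarrow> ('z \<Rightarrow> 'e \<Rightarrow> 'z option)
    \<Rightarrow> ('x, 'z, 'e) mstate \<Rightarrow> 'e mevent \<Rightarrow> ('x, 'z, 'e) mstate option" where
  "aas_step \<delta> So Sv \<xi> (Env q qt z) (Ob \<sigma>) =
     (if \<sigma> \<in> Oen (aug \<delta>) So qt (DeltaZ \<xi> z) then Some (Att q qt z \<sigma>) else None)"
| "aas_step \<delta> So Sv \<xi> (Att q qt z \<sigma>) e =
     (if e \<in> Vset Sv \<sigma> then
        (let a = hat_val e;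
             \<gamma> = DeltaZ \<xi> z;
             q' = NXo \<delta> a (UR \<delta> So \<gamma> q);
             qt' = NX (aug \<delta>) \<sigma> (UR (aug \<delta>) So \<gamma> qt);
             z' = (if q' \<noteq> {} then Option.bind z (\<lambda>zz. xi_opt \<xi> zz a) else None)
         in Some (Env q' qt' z'))
      else None)"
| "aas_step \<delta> So Sv \<xi> (Env q qt z) (Hat _) = None"
| "aas_step \<delta> So Sv \<xi> (Env q qt z) HatEps = None"

definition aas_init :: "'x set \<Rightarrow> 'z \<Rightarrow> ('x, 'z, 'e) mstate" where
  "aas_init X0 z0 = Env X0 {(x, x) | x. x \<in> X0} (Some z0)"

fun Qdet :: "'x set \<Rightarrow> ('x, 'z, 'e) mstate \<Rightarrow> bool" where
  "Qdet Xsec (Env q qt z) = (Iof qt \<subseteq> Xsec \<or> Iof qt \<inter> Xsec = {})"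
| "Qdet Xsec (Att _ _ _ _) = False"

fun Qud :: "('x \<Rightarrow> 'e \<Rightarrow> 'x option) \<Rightarrow> 'e set \<Rightarrow> ('z \<Rightarrow> 'e \<Rightarrow> 'z option) \<Rightarrow> 'x set
    \<Rightarrow> ('x, 'z, 'e) mstate \<Rightarrow> bool" where
  "Qud \<delta> So \<xi> Xsec (Env q qt z) =
     (Iof qt \<inter> Xsec \<noteq> {} \<and>
      (\<forall>(x0, x)\<in>UR (aug \<delta>) So (DeltaZ \<xi> z) qt. x0 \<in> Xsec \<longrightarrow>
          (\<exists>x0'. (x0', x) \<in> UR (aug \<delta>) So (DeltaZ \<xi> z) qt \<and> x0' \<notin> Xsec)))"
| "Qud \<delta> So \<xi> Xsec (Att _ _ _ _) = False"

text \<open>Transitions of the simplified AAS (before restriction to the reachable part).\<close>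
definition ms_step :: "('x \<Rightarrow> 'e \<Rightarrow> 'x option) \<Rightarrow> 'e set \<Rightarrow> 'e set \<Rightarrow> ('z \<Rightarrow> 'e \<Rightarrow> 'z option) \<Rightarrow> 'x set
    \<Rightarrow> ('x, 'z, 'e) mstate \<Rightarrow> 'e mevent \<Rightarrow> ('x, 'z, 'e) mstate option" where
  "ms_step \<delta> So Sv \<xi> Xsec s e =
     (if Qdet Xsec s \<or> Qud \<delta> So \<xi> Xsec s then None else aas_step \<delta> So Sv \<xi> s e)"

inductive_set reach :: "('s \<Rightarrow> 'a \<Rightarrow> 's option) \<Rightarrow> 's \<Rightarrow> 's set" for step q0 where
  reach_init: "q0 \<in> reach step q0"
| reach_step: "q \<in> reach step q0 \<Longrightarrow> step q e = Some q' \<Longrightarrow> q' \<in> reach step q0"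

text \<open>Single attack structure m (given by its transition function) of the automaton
  with transition function ms and initial state q0 (states reachable from q0).\<close>
definition is_SAS :: "(('x, 'z, 'e) mstate \<Rightarrow> 'e mevent \<Rightarrow> ('x, 'z, 'e) mstate option)
    \<Rightarrow> ('x, 'z, 'e) mstate \<Rightarrow> (('x, 'z, 'e) mstate \<Rightarrow> 'e mevent \<Rightarrow> ('x, 'z, 'e) mstate option) \<Rightarrow> bool" where
  "is_SAS ms q0 m =
     ((\<forall>q e q'. m q e = Some q' \<longrightarrow> q \<in> reach ms q0 \<and> ms q e = Some q') \<and>
      (\<forall>q\<in>reach m q0. is_att q \<longrightarrow> (\<exists>!e. m q e \<noteq> None)) \<and>
      (\<forall>q\<in>reach m q0. is_env q \<longrightarrow> (\<forall>e. ms q e \<noteq> None \<longrightarrow> m q e = ms q e)))"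

definition obs_of :: "'e mevent list \<Rightarrow> 'e list" where
  "obs_of h = concat (map (\<lambda>e. case e of Ob \<sigma> \<Rightarrow> [\<sigma>] | _ \<Rightarrow> []) h)"

definition ext_strings :: "(('x, 'z, 'e) mstate \<Rightarrow> 'e mevent \<Rightarrow> ('x, 'z, 'e) mstate option)
    \<Rightarrow> ('x, 'z, 'e) mstate \<Rightarrow> 'e mevent list set" where
  "ext_strings m q0 = {h. \<exists>q. deltas m q0 h = Some q \<and> is_env q}"

definition induced :: "(('x, 'z, 'e) mstate \<Rightarrow> 'e mevent \<Rightarrow> ('x, 'z, 'e) mstate option)
    \<Rightarrow> ('x, 'z, 'e) mstate \<Rightarrow> 'e list \<Rightarrow> 'e option" where
  "induced m q0 \<alpha> =
     (if \<alpha> = [] then None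
      else if \<exists>h\<in>ext_strings m q0. obs_of h = \<alpha>
      then hat_val (last (THE h. h \<in> ext_strings m q0 \<and> obs_of h = \<alpha>))
      else Some (last \<alpha>))"

end

theory Submission
  imports Defs
begin

text \<open>Along an observation \<open>\<beta>\<close>, the environment state of the All Attack Structure reached
  under an attacker \<open>A\<close> records the supervisor's estimate and the state of \<open>H\<close> after the
  corrupted observation \<open>g_A(\<beta>)\<close> (or \<open>z_att\<close> once the attack is exposed), together with the
  augmented estimate of the attacked loop \<open>S_A/G\<close>. Hence \<open>A\<close> is IS-detectable iff its run
  reaches a state from which an enabled event leads to a positively detected state. The run
  stays inside the simplified structure until that happens: before positive detection it cannot
  enter a negatively detected state, since the secret initial state revealed later is still
  consistent, nor an undetectable one, since there every secret initial state has a non-secret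
  twin in the same current state and twins share all continuations. A single attack structure
  through the detecting state induces an IS-detectable attacker; conversely every single attack
  structure induces an attacker.\<close>

lemma deltas_Nil [simp]: "deltas \<delta> x [] = Some x"
  by (simp add: deltas_def)

lemma deltas_Cons [simp]: "deltas \<delta> x (\<sigma> # s) = Option.bind (\<delta> x \<sigma>) (\<lambda>y. deltas \<delta> y s)"
proof -
  have stuck: "foldl (\<lambda>acc \<sigma>. Option.bind acc (\<lambda>y. \<delta> y \<sigma>)) None t = None" for t
    by (induction t) auto
  show ?thesis
    by (cases "\<delta> x \<sigma>") (simp_all add: deltas_def stuck)
qed

lemma deltas_append: "deltas \<delta> x (s @ t) = Option.bind (deltas \<delta> x s) (\<lambda>y. deltas \<delta> y t)"
  by (induction s arbitrary: x) (auto intro: Option.bind_cong)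

lemma deltas_snoc: "deltas \<delta> x (s @ [\<sigma>]) = Option.bind (deltas \<delta> x s) (\<lambda>y. \<delta> y \<sigma>)"
  by (simp add: deltas_append bind_eq_None_conv split: Option.bind_split)

lemma deltas_append_None: "deltas \<delta> x s = None \<Longrightarrow> deltas \<delta> x (s @ t) = None"
  by (simp add: deltas_append)

lemma reach_iff_deltas: "q \<in> reach step q0 \<longleftrightarrow> (\<exists>h. deltas step q0 h = Some q)"
proof
  assume "q \<in> reach step q0"
  then show "\<exists>h. deltas step q0 h = Some q"
  proof (induction rule: reach.induct)
    case reach_init
    show ?case by (metis deltas_Nil)
  next
    case (reach_step q e q')
    then obtain h where "deltas step q0 h = Some q" by blast
    with reach_step.hyps(2) show ?case by (metis deltas_snoc bind.simps(2))
  qed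
next
  assume "\<exists>h. deltas step q0 h = Some q"
  then obtain h where "deltas step q0 h = Some q" by blast
  then show "q \<in> reach step q0"
  proof (induction h arbitrary: q rule: rev_induct)
    case Nil
    then show ?case by (auto intro: reach.intros)
  next
    case (snoc e h)
    then obtain p where "deltas step q0 h = Some p" "step p e = Some q"
      by (auto simp: deltas_snoc bind_eq_Some_conv)
    with snoc.IH show ?case by (auto intro: reach.intros)
  qed
qed

lemma proj_Nil [simp]: "proj So [] = []"
  by (simp add: proj_def)

lemma proj_append [simp]: "proj So (s @ t) = proj So s @ proj So t"
  by (simp add: proj_def)

lemma proj_Cons [simp]: "proj So (a # s) = (if a \<in> So then a # proj So s else proj So s)"
  by (simp add: proj_def)

lemma proj_eq_Nil_iff: "proj So s = [] \<longleftrightarrow> set s \<subseteq> - So"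
  by (auto simp: proj_def filter_empty_conv)

lemma proj_eq_append_split:
  "proj So s = \<alpha> @ \<gamma> \<Longrightarrow> \<exists>s1 s2. s = s1 @ s2 \<and> proj So s1 = \<alpha> \<and> proj So s2 = \<gamma>"
proof (induction \<alpha> arbitrary: s)
  case Nil
  then show ?case by (metis append_Nil proj_Nil)
next
  case (Cons a \<alpha>)
  then obtain us vs where s: "s = us @ a # vs" "proj So us = []" "a \<in> So" "proj So vs = \<alpha> @ \<gamma>"
    by (auto simp: proj_def filter_eq_Cons_iff filter_empty_conv)
  from Cons.IH[OF s(4)] obtain v1 v2 where "vs = v1 @ v2" "proj So v1 = \<alpha>" "proj So v2 = \<gamma>"
    by blast
  with s show ?case
    by (intro exI[of _ "us @ a # v1"] exI[of _ v2]) (simp add: proj_def)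
qed

lemma proj_eq_snoc_split:
  assumes "proj So s = \<beta> @ [\<sigma>]"
  shows "\<exists>s1 w. s = s1 @ \<sigma> # w \<and> proj So s1 = \<beta> \<and> \<sigma> \<in> So \<and> set w \<subseteq> - So"
proof -
  obtain s1 s2 where s: "s = s1 @ s2" "proj So s1 = \<beta>" "proj So s2 = [\<sigma>]"
    using proj_eq_append_split[OF assms] by blast
  then obtain us vs where "s2 = us @ \<sigma> # vs" "proj So us = []" "\<sigma> \<in> So" "proj So vs = []"
    unfolding proj_def filter_eq_Cons_iff by (metis filter_False)
  with s show ?thesis
    by (intro exI[of _ "s1 @ us"] exI[of _ vs]) (simp add: proj_eq_Nil_iff)
qed

lemma clang_deltas: "s \<in> clang \<delta> So T x0 \<Longrightarrow> \<exists>x. deltas \<delta> x0 s = Some x"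
  by (induction rule: clang.induct) auto

lemma clang_snoc_iff:
  "s @ [\<sigma>] \<in> clang \<delta> So T x0 \<longleftrightarrow>
     s \<in> clang \<delta> So T x0 \<and> deltas \<delta> x0 (s @ [\<sigma>]) \<noteq> None \<and> \<sigma> \<in> T (proj So s)"
  by (auto elim: clang.cases intro: clang.intros)

lemma clang_prefix: "s @ t \<in> clang \<delta> So T x0 \<Longrightarrow> s \<in> clang \<delta> So T x0"
  by (induction t rule: rev_induct) (auto simp: clang_snoc_iff simp flip: append_assoc)

lemma clang_append_unobservable_iff:
  assumes "set w \<subseteq> - So"
  shows "s @ w \<in> clang \<delta> So T x0 \<longleftrightarrow>
    s \<in> clang \<delta> So T x0 \<and> set w \<subseteq> T (proj So s) \<and> deltas \<delta> x0 (s @ w) \<noteq> None"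
  using assms
proof (induction w rule: rev_induct)
  case Nil
  then show ?case by (auto dest: clang_deltas)
next
  case (snoc a w)
  have "proj So w = []"
    using snoc.prems by (simp add: proj_eq_Nil_iff)
  moreover have "deltas \<delta> x0 (s @ w @ [a]) \<noteq> None \<Longrightarrow> deltas \<delta> x0 (s @ w) \<noteq> None"
    using deltas_append_None[of \<delta> x0 "s @ w" "[a]"] by (metis append_assoc)
  ultimately show ?case
    using snoc by (auto simp: clang_snoc_iff simp flip: append_assoc)
qed

lemma clang_continuation_transfer:
  assumes "s1' \<in> clang \<delta> So T x0'" and "deltas \<delta> x0 s1 = Some x" and "deltas \<delta> x0' s1' = Some x"
    and "proj So s1 = proj So s1'" and "s1 @ s2 \<in> clang \<delta> So T x0"
  shows "s1' @ s2 \<in> clang \<delta> So T x0'"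
  using assms(5)
proof (induction s2 rule: rev_induct)
  case Nil
  show ?case using assms(1) by simp
next
  case (snoc a s2)
  then have "s1 @ s2 \<in> clang \<delta> So T x0" and "a \<in> T (proj So (s1 @ s2))"
    and "deltas \<delta> x0 (s1 @ s2 @ [a]) \<noteq> None"
    by (auto simp: clang_snoc_iff simp flip: append_assoc)
  moreover have "deltas \<delta> x0' (s1' @ s2 @ [a]) = deltas \<delta> x0 (s1 @ s2 @ [a])"
    using assms(2,3) by (simp add: deltas_append)
  ultimately show ?case
    using snoc.IH assms(4) by (auto simp: clang_snoc_iff simp flip: append_assoc)
qed

lemma clangU_subset_langG: "clangU \<delta> X0 So T \<subseteq> langG \<delta> X0"
  by (fastforce simp: clangU_def langG_def dest: clang_deltas)

section \<open>State estimates\<close>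

abbreviation obs_lang :: "('x \<Rightarrow> 'e \<Rightarrow> 'x option) \<Rightarrow> 'x set \<Rightarrow> 'e set \<Rightarrow> ('e list \<Rightarrow> 'e set) \<Rightarrow> 'e list set"
  where "obs_lang \<delta> X0 So T \<equiv> proj So ` clangU \<delta> X0 So T"

lemma subset_UR: "q \<subseteq> UR \<delta> So \<gamma> q"
  by (auto simp: UR_def intro!: exI[of _ "[]"])

lemma UR_UR [simp]: "UR \<delta> So \<gamma> (UR \<delta> So \<gamma> q) = UR \<delta> So \<gamma> q"
proof
  show "UR \<delta> So \<gamma> (UR \<delta> So \<gamma> q) \<subseteq> UR \<delta> So \<gamma> q"
  proof
    fix x
    assume "x \<in> UR \<delta> So \<gamma> (UR \<delta> So \<gamma> q)"
    then obtain x1 s1 y s where "x1 \<in> q" "set s1 \<subseteq> - So \<inter> \<gamma>" "deltas \<delta> x1 s1 = Some y"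
      "set s \<subseteq> - So \<inter> \<gamma>" "deltas \<delta> y s = Some x"
      by (auto simp: UR_def)
    then show "x \<in> UR \<delta> So \<gamma> q"
      unfolding UR_def by (auto simp: deltas_append intro!: bexI[of _ x1] exI[of _ "s1 @ s"])
  qed
qed (rule subset_UR)

lemma UR_eq_empty_iff [simp]: "UR \<delta> So \<gamma> q = {} \<longleftrightarrow> q = {}"
  using subset_UR[of q \<delta> So \<gamma>] by (auto simp: UR_def)

lemma Oen_iff_UR:
  "\<sigma> \<in> Oen \<delta> So q \<gamma> \<longleftrightarrow> \<sigma> \<in> So \<and> \<sigma> \<in> \<gamma> \<and> (\<exists>y\<in>UR \<delta> So \<gamma> q. \<delta> y \<sigma> \<noteq> None)"
proof -
  have "deltas \<delta> x (w @ [\<sigma>]) \<noteq> None \<longleftrightarrow> (\<exists>y. deltas \<delta> x w = Some y \<and> \<delta> y \<sigma> \<noteq> None)" for x w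
    by (cases "deltas \<delta> x w") (auto simp: deltas_snoc)
  then show ?thesis
    unfolding Oen_def UR_def by blast
qed

lemma estC_eq_UN: "estC \<delta> X0 So T \<beta> = (\<Union>x0\<in>X0. estC \<delta> {x0} So T \<beta>)"
  by (auto simp: estC_def)

lemma estC_Nil: "estC \<delta> X0 So T [] = UR \<delta> So (T []) X0"
proof -
  have "s \<in> clang \<delta> So T x0 \<longleftrightarrow> set s \<subseteq> T [] \<and> deltas \<delta> x0 s \<noteq> None"
    if "set s \<subseteq> - So" for s x0
    using clang_append_unobservable_iff[OF that, of "[]"] by (simp add: clang.clang_Nil)
  then show ?thesis
    unfolding estC_def UR_def proj_eq_Nil_iff by blast
qed

lemma clang_observe_unobservable_iff:
  assumes "\<sigma> \<in> So" and "set w \<subseteq> - So"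
  shows "s1 @ \<sigma> # w \<in> clang \<delta> So T x0 \<longleftrightarrow>
    s1 \<in> clang \<delta> So T x0 \<and> \<sigma> \<in> T (proj So s1) \<and> set w \<subseteq> T (proj So s1 @ [\<sigma>]) \<and>
    deltas \<delta> x0 (s1 @ \<sigma> # w) \<noteq> None"
proof -
  have "s1 @ \<sigma> # w \<in> clang \<delta> So T x0 \<longleftrightarrow>
      s1 @ [\<sigma>] \<in> clang \<delta> So T x0 \<and> set w \<subseteq> T (proj So (s1 @ [\<sigma>])) \<and>
      deltas \<delta> x0 ((s1 @ [\<sigma>]) @ w) \<noteq> None"
    using clang_append_unobservable_iff[OF assms(2), of "s1 @ [\<sigma>]" \<delta> T x0] assms(1) by simp
  then show ?thesis
    using assms(1) deltas_append_None[of \<delta> x0 "s1 @ [\<sigma>]" w] by (auto simp: clang_snoc_iff)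
qed

lemma mem_estC_snoc_iff:
  assumes "\<sigma> \<in> So"
  shows "x \<in> estC \<delta> X0 So T (\<beta> @ [\<sigma>]) \<longleftrightarrow>
    (\<exists>x0\<in>X0. \<exists>s1 w. s1 \<in> clang \<delta> So T x0 \<and> proj So s1 = \<beta> \<and> \<sigma> \<in> T \<beta> \<and>
       set w \<subseteq> - So \<inter> T (\<beta> @ [\<sigma>]) \<and> deltas \<delta> x0 (s1 @ \<sigma> # w) = Some x)"
    (is "_ \<longleftrightarrow> ?R")
proof
  assume "x \<in> estC \<delta> X0 So T (\<beta> @ [\<sigma>])"
  then obtain x0 s where x0: "x0 \<in> X0" and s: "s \<in> clang \<delta> So T x0" "proj So s = \<beta> @ [\<sigma>]"
    "deltas \<delta> x0 s = Some x"
    by (auto simp: estC_def)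
  then obtain s1 w where w: "s = s1 @ \<sigma> # w" "proj So s1 = \<beta>" "set w \<subseteq> - So"
    using proj_eq_snoc_split by metis
  with s clang_observe_unobservable_iff[OF assms w(3), of s1 \<delta> T x0] have
    "s1 \<in> clang \<delta> So T x0" "\<sigma> \<in> T \<beta>" "set w \<subseteq> T (\<beta> @ [\<sigma>])"
    by simp_all
  with x0 s w show ?R
    by blast
next
  assume ?R
  then obtain x0 s1 w where "x0 \<in> X0" "s1 \<in> clang \<delta> So T x0" "proj So s1 = \<beta>" "\<sigma> \<in> T \<beta>"
    "set w \<subseteq> - So \<inter> T (\<beta> @ [\<sigma>])" "deltas \<delta> x0 (s1 @ \<sigma> # w) = Some x"
    by blast
  with clang_observe_unobservable_iff[OF assms, of w s1 \<delta> T x0] assms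
  show "x \<in> estC \<delta> X0 So T (\<beta> @ [\<sigma>])"
    unfolding estC_def by (intro CollectI bexI[of _ x0] bexI[of _ "s1 @ \<sigma> # w"])
      (auto simp: proj_eq_Nil_iff[symmetric])
qed

lemma estC_snoc:
  assumes "\<sigma> \<in> So"
  shows "estC \<delta> X0 So T (\<beta> @ [\<sigma>]) =
    (if \<sigma> \<in> T \<beta> then UR \<delta> So (T (\<beta> @ [\<sigma>])) (NX \<delta> \<sigma> (estC \<delta> X0 So T \<beta>)) else {})"
proof -
  have "x \<in> estC \<delta> X0 So T (\<beta> @ [\<sigma>]) \<longleftrightarrow>
      \<sigma> \<in> T \<beta> \<and> x \<in> UR \<delta> So (T (\<beta> @ [\<sigma>])) (NX \<delta> \<sigma> (estC \<delta> X0 So T \<beta>))" for x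
    unfolding mem_estC_snoc_iff[OF assms]
    by (auto simp: estC_def UR_def NX_def deltas_append bind_eq_Some_conv dest: clang_deltas) blast
  then show ?thesis
    by auto
qed

lemma estC_snoc_nonempty: "estC \<delta> X0 So T (\<beta> @ [\<sigma>]) \<noteq> {} \<Longrightarrow> \<sigma> \<in> So \<and> \<sigma> \<in> T \<beta>"
proof -
  assume nonempty: "estC \<delta> X0 So T (\<beta> @ [\<sigma>]) \<noteq> {}"
  then obtain x0 s where "proj So s = \<beta> @ [\<sigma>]"
    unfolding estC_def by blast
  then have "\<sigma> \<in> So"
    using proj_eq_snoc_split by metis
  with nonempty show ?thesis
    using estC_snoc[of \<sigma> So \<delta> X0 T \<beta>] by meson
qed

lemma estC_append_nonempty: "estC \<delta> X0 So T (\<alpha> @ \<gamma>) \<noteq> {} \<Longrightarrow> estC \<delta> X0 So T \<alpha> \<noteq> {}"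
proof -
  assume "estC \<delta> X0 So T (\<alpha> @ \<gamma>) \<noteq> {}"
  then obtain x0 s where x0: "x0 \<in> X0" and s: "s \<in> clang \<delta> So T x0" "proj So s = \<alpha> @ \<gamma>"
    unfolding estC_def by blast
  then obtain s1 s2 where "s = s1 @ s2" "proj So s1 = \<alpha>"
    using proj_eq_append_split by metis
  moreover from s \<open>s = s1 @ s2\<close> have "s1 \<in> clang \<delta> So T x0"
    using clang_prefix by metis
  moreover obtain x where "deltas \<delta> x0 s1 = Some x"
    using clang_deltas[OF \<open>s1 \<in> clang \<delta> So T x0\<close>] by blast
  ultimately show ?thesis
    using x0 unfolding estC_def by blast
qed

lemma obs_lang_iff_estC: "\<beta> \<in> obs_lang \<delta> X0 So T \<longleftrightarrow> estC \<delta> X0 So T \<beta> \<noteq> {}"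
  by (auto simp: clangU_def estC_def image_def) (metis clang_deltas)+

lemma obs_lang_prefix: "\<alpha> @ \<gamma> \<in> obs_lang \<delta> X0 So T \<Longrightarrow> \<alpha> \<in> obs_lang \<delta> X0 So T"
  using estC_append_nonempty by (metis obs_lang_iff_estC)

lemma obs_lang_snoc_enabled: "\<beta> @ [\<sigma>] \<in> obs_lang \<delta> X0 So T \<Longrightarrow> \<sigma> \<in> So \<and> \<sigma> \<in> T \<beta>"
  by (metis obs_lang_iff_estC estC_snoc_nonempty)

lemma estI_eq: "estI \<delta> X0 So T \<beta> = {x0 \<in> X0. estC \<delta> {x0} So T \<beta> \<noteq> {}}"
  by (auto simp: estI_def estC_def) (metis clang_deltas)+

lemma estI_nonempty_iff_obs_lang: "estI \<delta> X0 So T \<beta> \<noteq> {} \<longleftrightarrow> \<beta> \<in> obs_lang \<delta> X0 So T"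
  by (simp add: estI_eq obs_lang_iff_estC estC_eq_UN[of _ X0] Bex_def)

lemma estI_append_subset: "estI \<delta> X0 So T (\<alpha> @ \<gamma>) \<subseteq> estI \<delta> X0 So T \<alpha>"
  by (auto simp: estI_eq) (metis empty_iff estC_append_nonempty)

lemma deltas_aug: "deltas (aug \<delta>) (x0, x) s = map_option (Pair x0) (deltas \<delta> x s)"
  by (induction s arbitrary: x) (auto simp: aug_def split: Option.bind_split)

lemma mem_UR_aug_iff:
  "(x0, y) \<in> UR (aug \<delta>) So \<gamma> Q \<longleftrightarrow> (\<exists>x. (x0, x) \<in> Q \<and> y \<in> UR \<delta> So \<gamma> {x})"
proof
  assume "(x0, y) \<in> UR (aug \<delta>) So \<gamma> Q"
  then obtain p s where "p \<in> Q" "set s \<subseteq> - So \<inter> \<gamma>" "deltas (aug \<delta>) p s = Some (x0, y)"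
    by (auto simp: UR_def)
  then show "\<exists>x. (x0, x) \<in> Q \<and> y \<in> UR \<delta> So \<gamma> {x}"
    by (cases p) (auto simp: UR_def deltas_aug)
next
  assume "\<exists>x. (x0, x) \<in> Q \<and> y \<in> UR \<delta> So \<gamma> {x}"
  then obtain x s where "(x0, x) \<in> Q" "set s \<subseteq> - So \<inter> \<gamma>" "deltas \<delta> x s = Some y"
    by (auto simp: UR_def)
  then show "(x0, y) \<in> UR (aug \<delta>) So \<gamma> Q"
    unfolding UR_def by (auto simp: deltas_aug intro!: bexI[of _ "(x0, x)"])
qed

lemma mem_NX_aug_iff: "(x0, y) \<in> NX (aug \<delta>) \<sigma> Q \<longleftrightarrow> (\<exists>x. (x0, x) \<in> Q \<and> \<delta> x \<sigma> = Some y)"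
  by (force simp: NX_def aug_def)

lemma Iof_NX_aug_subset: "Iof (NX (aug \<delta>) \<sigma> Q) \<subseteq> Iof Q"
  by (auto simp: Iof_def NX_def aug_def image_iff) (metis fst_conv)

lemma Iof_UR_aug [simp]: "Iof (UR (aug \<delta>) So \<gamma> Q) = Iof Q"
  using subset_UR[of Q "aug \<delta>" So \<gamma>] by (force simp: Iof_def mem_UR_aug_iff)

definition estA :: "('x \<Rightarrow> 'e \<Rightarrow> 'x option) \<Rightarrow> 'x set \<Rightarrow> 'e set \<Rightarrow> ('e list \<Rightarrow> 'e set) \<Rightarrow> 'e list
    \<Rightarrow> ('x \<times> 'x) set" where
  "estA \<delta> X0 So T \<beta> = {(x0, x). x0 \<in> X0 \<and> x \<in> estC \<delta> {x0} So T \<beta>}"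

lemma Iof_estA: "Iof (estA \<delta> X0 So T \<beta>) = estI \<delta> X0 So T \<beta>"
  by (force simp: Iof_def estA_def estI_eq)

lemma UR_aug_diag: "UR (aug \<delta>) So (T []) {(x, x) | x. x \<in> X0} = estA \<delta> X0 So T []"
  by (auto simp: estA_def estC_Nil mem_UR_aug_iff)

lemma UR_aug_NX_estA:
  assumes "\<sigma> \<in> So" and "\<sigma> \<in> T \<beta>"
  shows "UR (aug \<delta>) So (T (\<beta> @ [\<sigma>])) (NX (aug \<delta>) \<sigma> (estA \<delta> X0 So T \<beta>)) = estA \<delta> X0 So T (\<beta> @ [\<sigma>])"
proof -
  have "(x0, y) \<in> UR (aug \<delta>) So (T (\<beta> @ [\<sigma>])) (NX (aug \<delta>) \<sigma> (estA \<delta> X0 So T \<beta>)) \<longleftrightarrow>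
      (\<exists>x. (\<exists>x'. x0 \<in> X0 \<and> x' \<in> estC \<delta> {x0} So T \<beta> \<and> \<delta> x' \<sigma> = Some x) \<and>
        y \<in> UR \<delta> So (T (\<beta> @ [\<sigma>])) {x})" for x0 y
    by (simp add: mem_UR_aug_iff mem_NX_aug_iff estA_def)
  also have "\<dots> x0 y \<longleftrightarrow> x0 \<in> X0 \<and> y \<in> UR \<delta> So (T (\<beta> @ [\<sigma>])) (NX \<delta> \<sigma> (estC \<delta> {x0} So T \<beta>))"
    for x0 y
    unfolding UR_def NX_def by blast
  also have "\<dots> x0 y \<longleftrightarrow> (x0, y) \<in> estA \<delta> X0 So T (\<beta> @ [\<sigma>])" for x0 y
    using assms by (simp add: estA_def estC_snoc)
  finally show ?thesis by auto
qed

lemma Oen_aug_iff_obs_lang: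
  assumes "UR (aug \<delta>) So (T \<beta>) qt = estA \<delta> X0 So T \<beta>"
  shows "\<sigma> \<in> Oen (aug \<delta>) So qt (T \<beta>) \<longleftrightarrow> \<beta> @ [\<sigma>] \<in> obs_lang \<delta> X0 So T"
proof -
  have "(\<exists>p\<in>estA \<delta> X0 So T \<beta>. aug \<delta> p \<sigma> \<noteq> None) \<longleftrightarrow> NX \<delta> \<sigma> (estC \<delta> X0 So T \<beta>) \<noteq> {}"
    unfolding estA_def aug_def NX_def estC_def by auto
  with assms have "\<sigma> \<in> Oen (aug \<delta>) So qt (T \<beta>) \<longleftrightarrow>
      \<sigma> \<in> So \<and> \<sigma> \<in> T \<beta> \<and> NX \<delta> \<sigma> (estC \<delta> X0 So T \<beta>) \<noteq> {}"
    by (simp add: Oen_iff_UR)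
  also have "\<dots> \<longleftrightarrow> estC \<delta> X0 So T (\<beta> @ [\<sigma>]) \<noteq> {}"
    using estC_snoc_nonempty[of \<delta> X0 So T \<beta> \<sigma>]
    by (cases "\<sigma> \<in> So \<and> \<sigma> \<in> T \<beta>") (auto simp: estC_snoc)
  finally show ?thesis
    by (simp add: obs_lang_iff_estC)
qed

text \<open>Twins reach the same state under the same observation, so they share all continuations.\<close>
lemma secret_twins_prevent_detection:
  assumes twins: "\<forall>(x0, x)\<in>estA \<delta> X0 So T \<beta>. x0 \<in> Xsec \<longrightarrow>
      (\<exists>x0'. (x0', x) \<in> estA \<delta> X0 So T \<beta> \<and> x0' \<notin> Xsec)"
    and secret: "estI \<delta> X0 So T (\<beta> @ \<gamma>) \<subseteq> Xsec"
  shows "estI \<delta> X0 So T (\<beta> @ \<gamma>) = {}"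
proof (rule ccontr)
  assume "estI \<delta> X0 So T (\<beta> @ \<gamma>) \<noteq> {}"
  then obtain x0 s where x0: "x0 \<in> X0" "x0 \<in> Xsec" and s: "s \<in> clang \<delta> So T x0" "proj So s = \<beta> @ \<gamma>"
    using secret by (auto simp: estI_def)
  then obtain s1 s2 where s12: "s = s1 @ s2" "proj So s1 = \<beta>" "proj So s2 = \<gamma>"
    using proj_eq_append_split by metis
  with s have "s1 \<in> clang \<delta> So T x0"
    using clang_prefix by metis
  then obtain x where x: "deltas \<delta> x0 s1 = Some x"
    using clang_deltas by metis
  with x0 s12 \<open>s1 \<in> clang \<delta> So T x0\<close> have "(x0, x) \<in> estA \<delta> X0 So T \<beta>"
    by (auto simp: estA_def estC_def)
  with twins x0 obtain x0' where "(x0', x) \<in> estA \<delta> X0 So T \<beta>" "x0' \<notin> Xsec"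
    by blast
  then obtain s1' where s1': "x0' \<in> X0" "s1' \<in> clang \<delta> So T x0'" "proj So s1' = \<beta>"
    "deltas \<delta> x0' s1' = Some x"
    by (auto simp: estA_def estC_def)
  have "s1' @ s2 \<in> clang \<delta> So T x0'"
    using clang_continuation_transfer[OF s1'(2) x s1'(4)] s s12 s1'(3) by simp
  with s1' s12 have "x0' \<in> estI \<delta> X0 So T (\<beta> @ \<gamma>)"
    unfolding estI_def by (auto intro!: bexI[of _ "s1' @ s2"])
  with secret \<open>x0' \<notin> Xsec\<close> show False
    by blast
qed

lemma gA_Nil [simp]: "gA A [] = []"
  by (simp add: gA_def)

lemma gA_snoc: "gA A (\<beta> @ [\<sigma>]) = gA A \<beta> @ opt_list (A (\<beta> @ [\<sigma>]))"
proof -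
  have prefix: "map (\<lambda>i. opt_list (A (take (Suc i) (\<beta> @ [\<sigma>])))) [0..<length \<beta>] =
      map (\<lambda>i. opt_list (A (take (Suc i) \<beta>))) [0..<length \<beta>]"
    by (rule map_cong) auto
  show ?thesis
    by (simp add: gA_def prefix del: take_append)
qed

lemma gA_append: "\<exists>r. gA A (\<beta> @ \<gamma>) = gA A \<beta> @ r"
proof (induction \<gamma> rule: rev_induct)
  case Nil
  show ?case by simp
next
  case (snoc a \<gamma>)
  then show ?case
    using gA_snoc[of A "\<beta> @ \<gamma>" a] by auto
qed

lemma stealthy_along_prefix:
  "stealthy_along \<delta> X0 So S A (\<alpha> @ \<gamma>) \<Longrightarrow> stealthy_along \<delta> X0 So S A \<alpha>"
  using gA_append[of A \<alpha> \<gamma>] estC_append_nonempty unfolding stealthy_along_def by metis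

lemma SA_eq: "SA S A \<beta> = S (gA A \<beta>)"
  by (simp add: SA_def)

fun hat_of :: "'e option \<Rightarrow> 'e mevent" where
  "hat_of None = HatEps"
| "hat_of (Some b) = Hat b"

lemma hat_val_hat_of [simp]: "hat_val (hat_of a) = a"
  by (cases a) auto

lemma attacker_hat_of_in_Vset:
  assumes "is_attacker \<delta> X0 So Sv A" and "\<beta> @ [\<sigma>] \<in> proj So ` langG \<delta> X0"
  shows "hat_of (A (\<beta> @ [\<sigma>])) \<in> Vset Sv \<sigma>"
proof -
  have "(\<sigma> \<notin> Sv \<longrightarrow> A (\<beta> @ [\<sigma>]) = Some \<sigma>) \<and> (\<sigma> \<in> Sv \<longrightarrow> A (\<beta> @ [\<sigma>]) \<in> Some ` Sv \<union> {None})"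
    using assms unfolding is_attacker_def by blast
  then show ?thesis
    by (cases "A (\<beta> @ [\<sigma>])") (auto simp: Vset_def)
qed

lemma attacker_output_observable:
  assumes "is_attacker \<delta> X0 So Sv A" and "Sv \<subseteq> So" and "\<beta> @ [\<sigma>] \<in> obs_lang \<delta> X0 So T"
  shows "set_option (A (\<beta> @ [\<sigma>])) \<subseteq> So"
proof -
  from assms(3) have "\<beta> @ [\<sigma>] \<in> proj So ` langG \<delta> X0"
    using clangU_subset_langG by blast
  moreover have "\<sigma> \<in> So"
    using obs_lang_snoc_enabled[OF assms(3)] by simp
  ultimately show ?thesis
    using attacker_hat_of_in_Vset[OF assms(1)] assms(2) hat_val_hat_of[of "A (\<beta> @ [\<sigma>])"]
    by (force simp: Vset_def split: if_splits)
qed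

lemma realizes_deltas_proj:
  assumes "realizes \<delta> X0 So S \<xi> z0" and "deltas \<xi> z s = Some z'"
  shows "deltas \<xi> z (proj So s) = Some z'"
  using assms(2)
proof (induction s arbitrary: z' rule: rev_induct)
  case Nil
  then show ?case by simp
next
  case (snoc a s)
  then obtain y where y: "deltas \<xi> z s = Some y" "\<xi> y a = Some z'"
    by (auto simp: deltas_snoc bind_eq_Some_conv)
  show ?case
  proof (cases "a \<in> So")
    case True
    with snoc.IH y show ?thesis by (simp add: deltas_snoc)
  next
    case False
    with assms(1) y(2) have "z' = y"
      unfolding realizes_def by blast
    with snoc.IH y False show ?thesis by simp
  qed
qed

lemma realizes_obs_lang:
  assumes "realizes \<delta> X0 So S \<xi> z0" and "\<alpha> \<in> obs_lang \<delta> X0 So S"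
  shows "\<exists>z. deltas \<xi> z0 \<alpha> = Some z \<and> DeltaH \<xi> z = S \<alpha>"
proof -
  from assms(2) obtain s where "s \<in> clangU \<delta> X0 So S" "proj So s = \<alpha>"
    by blast
  with assms(1) show ?thesis
    unfolding realizes_def using realizes_deltas_proj[OF assms(1)] by metis
qed

section \<open>The All Attack Structure\<close>

definition aas_update :: "('x \<Rightarrow> 'e \<Rightarrow> 'x option) \<Rightarrow> 'e set \<Rightarrow> ('z \<Rightarrow> 'e \<Rightarrow> 'z option)
    \<Rightarrow> 'x set \<times> ('x \<times> 'x) set \<times> 'z option \<Rightarrow> 'e \<Rightarrow> 'e option \<Rightarrow> 'x set \<times> ('x \<times> 'x) set \<times> 'z option"
  where
  "aas_update \<delta> So \<xi> st \<sigma> a = (case st of (q, qt, z) \<Rightarrow>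
     (let \<gamma> = DeltaZ \<xi> z; q' = NXo \<delta> a (UR \<delta> So \<gamma> q)
      in (q', NX (aug \<delta>) \<sigma> (UR (aug \<delta>) So \<gamma> qt),
          if q' \<noteq> {} then Option.bind z (\<lambda>zz. xi_opt \<xi> zz a) else None)))"

lemma aas_update_None: "aas_update \<delta> So \<xi> (q, qt, None) \<sigma> a =
    (NXo \<delta> a (UR \<delta> So {} q), NX (aug \<delta>) \<sigma> (UR (aug \<delta>) So {} qt), None)"
  by (simp add: aas_update_def Let_def)

lemma aas_update_erase: "aas_update \<delta> So \<xi> (q, qt, Some zz) \<sigma> None =
    (UR \<delta> So (DeltaH \<xi> zz) q, NX (aug \<delta>) \<sigma> (UR (aug \<delta>) So (DeltaH \<xi> zz) qt),
     if UR \<delta> So (DeltaH \<xi> zz) q \<noteq> {} then Some zz else None)"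
  by (simp add: aas_update_def Let_def NXo_def xi_opt_def)

lemma aas_update_insert: "aas_update \<delta> So \<xi> (q, qt, Some zz) \<sigma> (Some b) =
    (NX \<delta> b (UR \<delta> So (DeltaH \<xi> zz) q), NX (aug \<delta>) \<sigma> (UR (aug \<delta>) So (DeltaH \<xi> zz) qt),
     if NX \<delta> b (UR \<delta> So (DeltaH \<xi> zz) q) \<noteq> {} then \<xi> zz b else None)"
  by (simp add: aas_update_def Let_def NXo_def xi_opt_def)

lemma aas_update_qt: "fst (snd (aas_update \<delta> So \<xi> (q, qt, z) \<sigma> a)) =
    NX (aug \<delta>) \<sigma> (UR (aug \<delta>) So (DeltaZ \<xi> z) qt)"
  by (simp add: aas_update_def Let_def)

lemma UR_aug_update_estA:
  assumes "UR (aug \<delta>) So (T \<beta>) qt = estA \<delta> X0 So T \<beta>" and "DeltaH \<xi> zz = T \<beta>"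
    and "\<sigma> \<in> So" and "\<sigma> \<in> T \<beta>"
  shows "UR (aug \<delta>) So (T (\<beta> @ [\<sigma>])) (fst (snd (aas_update \<delta> So \<xi> (q, qt, Some zz) \<sigma> a))) =
    estA \<delta> X0 So T (\<beta> @ [\<sigma>])"
  using assms UR_aug_NX_estA[where T = T, OF assms(3,4)] by (simp add: aas_update_qt)

lemma aas_step_Att_eq:
  "aas_step \<delta> So Sv \<xi> (Att q qt z \<sigma>) e =
    (if e \<in> Vset Sv \<sigma>
     then Some (case aas_update \<delta> So \<xi> (q, qt, z) \<sigma> (hat_val e) of (q', qt', z') \<Rightarrow> Env q' qt' z')
     else None)"
  by (simp add: aas_update_def Let_def)

lemma aas_step_EnvD:
  "aas_step \<delta> So Sv \<xi> (Env q qt z) e = Some r \<Longrightarrow>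
    \<exists>\<sigma>. e = Ob \<sigma> \<and> \<sigma> \<in> Oen (aug \<delta>) So qt (DeltaZ \<xi> z) \<and> r = Att q qt z \<sigma>"
  by (cases e) (auto split: if_splits)

lemma aas_step_AttD:
  "aas_step \<delta> So Sv \<xi> (Att q qt z \<sigma>) e = Some r \<Longrightarrow>
    e \<in> Vset Sv \<sigma> \<and> r = (case aas_update \<delta> So \<xi> (q, qt, z) \<sigma> (hat_val e) of (q', qt', z') \<Rightarrow> Env q' qt' z')"
  unfolding aas_step_Att_eq by (auto split: if_splits)

lemma ms_step_subset: "ms_step \<delta> So Sv \<xi> Xsec s e = Some r \<Longrightarrow> aas_step \<delta> So Sv \<xi> s e = Some r"
  by (simp add: ms_step_def split: if_splits)

lemma ms_step_eq_aas_step: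
  "\<not> (Qdet Xsec s \<or> Qud \<delta> So \<xi> Xsec s) \<Longrightarrow> ms_step \<delta> So Sv \<xi> Xsec s e = aas_step \<delta> So Sv \<xi> s e"
  unfolding ms_step_def by (rule if_not_P)

lemma ms_step_Att [simp]: "ms_step \<delta> So Sv \<xi> Xsec (Att q qt z \<sigma>) e = aas_step \<delta> So Sv \<xi> (Att q qt z \<sigma>) e"
  by (simp add: ms_step_eq_aas_step)

lemma ms_step_att_enabled: "is_att s \<Longrightarrow> \<exists>e. ms_step \<delta> So Sv \<xi> Xsec s e \<noteq> None"
proof (cases s)
  case (Att q qt z \<sigma>)
  have "(if \<sigma> \<in> Sv then HatEps else Hat \<sigma>) \<in> Vset Sv \<sigma>"
    by (simp add: Vset_def)
  with Att show ?thesis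
    by (auto simp: ms_step_def Let_def)
qed simp

lemma Oen_DeltaZ_nonempty: "\<sigma> \<in> Oen d So qt (DeltaZ \<xi> z) \<Longrightarrow> z \<noteq> None \<and> qt \<noteq> {}"
  by (cases z) (auto simp: Oen_def)

locale attack_setting =
  fixes \<delta> :: "'x \<Rightarrow> 'e \<Rightarrow> 'x option" and X0 Xsec :: "'x set" and So Sv :: "'e set"
    and S :: "'e list \<Rightarrow> 'e set" and \<xi> :: "'z \<Rightarrow> 'e \<Rightarrow> 'z option" and z0 :: 'z
  assumes realizes: "realizes \<delta> X0 So S \<xi> z0"
    and vulnerable_observable: "Sv \<subseteq> So"
begin

abbreviation "update \<equiv> aas_update \<delta> So \<xi>"

abbreviation "ms \<equiv> ms_step \<delta> So Sv \<xi> Xsec"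

abbreviation "q0 \<equiv> aas_init X0 z0"

text \<open>The components of the environment state of \<open>M\<close> reached along the observation \<open>\<beta>\<close>
  when the attacker \<open>A\<close> resolves every attack state.\<close>
fun aas_run_rev :: "('e list \<Rightarrow> 'e option) \<Rightarrow> 'e list \<Rightarrow> 'x set \<times> ('x \<times> 'x) set \<times> 'z option" where
  "aas_run_rev A [] = (X0, {(x, x) | x. x \<in> X0}, Some z0)"
| "aas_run_rev A (\<sigma> # r) = update (aas_run_rev A r) \<sigma> (A (rev (\<sigma> # r)))"

definition aas_run :: "('e list \<Rightarrow> 'e option) \<Rightarrow> 'e list \<Rightarrow> 'x set \<times> ('x \<times> 'x) set \<times> 'z option" where
  "aas_run A \<beta> = aas_run_rev A (rev \<beta>)"

lemma aas_run_Nil [simp]: "aas_run A [] = (X0, {(x, x) | x. x \<in> X0}, Some z0)"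
  by (simp add: aas_run_def)

lemma aas_run_snoc: "aas_run A (\<beta> @ [\<sigma>]) = update (aas_run A \<beta>) \<sigma> (A (\<beta> @ [\<sigma>]))"
  by (simp add: aas_run_def)

definition aas_env :: "('e list \<Rightarrow> 'e option) \<Rightarrow> 'e list \<Rightarrow> ('x, 'z, 'e) mstate" where
  "aas_env A \<beta> = (case aas_run A \<beta> of (q, qt, z) \<Rightarrow> Env q qt z)"

definition leads_to_positive_detection :: "('x, 'z, 'e) mstate \<Rightarrow> 'e \<Rightarrow> bool" where
  "leads_to_positive_detection s \<sigma> \<longleftrightarrow>
     (\<exists>q qt zz. s = Env q qt (Some zz) \<and> \<sigma> \<in> Oen (aug \<delta>) So qt (DeltaH \<xi> zz) \<and>
        Iof (NX (aug \<delta>) \<sigma> (UR (aug \<delta>) So (DeltaH \<xi> zz) qt)) \<subseteq> Xsec)"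

text \<open>\<open>z\<close> is the state of \<open>H\<close> after the corrupted observation \<open>\<alpha>\<close>, or \<open>None\<close> (the state
  \<open>z_att\<close>) once \<open>\<alpha>\<close> is inconsistent with \<open>S/G\<close>; the unobservable reach of \<open>q\<close> is the
  current-state estimate of \<open>S/G\<close> after \<open>\<alpha>\<close>.\<close>
definition tracks_supervisor :: "'e list \<Rightarrow> 'x set \<Rightarrow> 'z option \<Rightarrow> bool" where
  "tracks_supervisor \<alpha> q z \<longleftrightarrow>
     (z \<noteq> None \<longleftrightarrow> estC \<delta> X0 So S \<alpha> \<noteq> {}) \<and>
     (\<forall>zz. z = Some zz \<longrightarrow> deltas \<xi> z0 \<alpha> = Some zz \<and> DeltaH \<xi> zz = S \<alpha> \<and>
        UR \<delta> So (S \<alpha>) q = estC \<delta> X0 So S \<alpha>)"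

lemma tracks_supervisor_Nil:
  assumes "X0 \<noteq> {}"
  shows "tracks_supervisor [] X0 (Some z0)"
proof -
  have "[] \<in> obs_lang \<delta> X0 So S"
    using assms by (auto simp: clangU_def intro!: image_eqI[of _ _ "[]"] clang.clang_Nil)
  then have "DeltaH \<xi> z0 = S []"
    using realizes_obs_lang[OF realizes] by fastforce
  with assms show ?thesis
    by (simp add: tracks_supervisor_def estC_Nil)
qed

lemma tracks_supervisor_observe:
  assumes z: "deltas \<xi> z0 \<alpha> = Some zz" "DeltaH \<xi> zz = S \<alpha>" and "b \<in> So"
  defines "q' \<equiv> NX \<delta> b (estC \<delta> X0 So S \<alpha>)"
  shows "tracks_supervisor (\<alpha> @ [b]) q' (if q' \<noteq> {} then \<xi> zz b else None)"
proof (cases "b \<in> S \<alpha> \<and> q' \<noteq> {}")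
  case False
  with z(2) have "(if q' \<noteq> {} then \<xi> zz b else None) = None"
    by (auto simp: DeltaH_def)
  moreover have "estC \<delta> X0 So S (\<alpha> @ [b]) = {}"
    using False \<open>b \<in> So\<close> by (auto simp: estC_snoc q'_def)
  ultimately show ?thesis
    by (simp add: tracks_supervisor_def)
next
  case True
  then obtain zz' where zz': "\<xi> zz b = Some zz'"
    using z(2) by (auto simp: DeltaH_def)
  have est: "estC \<delta> X0 So S (\<alpha> @ [b]) = UR \<delta> So (S (\<alpha> @ [b])) q'"
    using True \<open>b \<in> So\<close> by (simp add: estC_snoc q'_def)
  with True have "\<alpha> @ [b] \<in> obs_lang \<delta> X0 So S"
    by (simp add: obs_lang_iff_estC)
  then obtain z' where "deltas \<xi> z0 (\<alpha> @ [b]) = Some z'" "DeltaH \<xi> z' = S (\<alpha> @ [b])"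
    using realizes_obs_lang[OF realizes] by blast
  moreover have "deltas \<xi> z0 (\<alpha> @ [b]) = Some zz'"
    using z(1) zz' by (simp add: deltas_snoc)
  ultimately show ?thesis
    using True zz' est by (simp add: tracks_supervisor_def)
qed

lemma tracks_supervisor_update:
  assumes "tracks_supervisor \<alpha> q z" and "set_option a \<subseteq> So"
  shows "tracks_supervisor (\<alpha> @ opt_list a)
    (fst (update (q, qt, z) \<sigma> a)) (snd (snd (update (q, qt, z) \<sigma> a)))"
proof (cases z)
  case None
  with assms(1) have "estC \<delta> X0 So S (\<alpha> @ opt_list a) = {}"
    using estC_append_nonempty unfolding tracks_supervisor_def by metis
  with None show ?thesis
    by (simp add: aas_update_None tracks_supervisor_def)
next
  case (Some zz)
  with assms(1) have z: "deltas \<xi> z0 \<alpha> = Some zz" "DeltaH \<xi> zz = S \<alpha>"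
    and est: "UR \<delta> So (S \<alpha>) q = estC \<delta> X0 So S \<alpha>" "estC \<delta> X0 So S \<alpha> \<noteq> {}"
    by (auto simp: tracks_supervisor_def)
  show ?thesis
  proof (cases a)
    case None
    have "UR \<delta> So (S \<alpha>) (estC \<delta> X0 So S \<alpha>) = estC \<delta> X0 So S \<alpha>"
      using est(1) by (metis UR_UR)
    with Some None z est show ?thesis
      by (simp add: aas_update_erase opt_list_def tracks_supervisor_def)
  next
    case (Some b)
    with assms(2) have "b \<in> So"
      by simp
    with \<open>z = Some zz\<close> Some z est show ?thesis
      using tracks_supervisor_observe[OF z \<open>b \<in> So\<close>]
      by (simp add: aas_update_insert opt_list_def split del: if_split)
  qed
qed

lemma aas_run_invariant:
  assumes A: "is_attacker \<delta> X0 So Sv A"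
    and "\<beta> \<in> obs_lang \<delta> X0 So (SA S A)" and "aas_run A \<beta> = (q, qt, z)"
  shows "tracks_supervisor (gA A \<beta>) q z \<and>
    (\<forall>zz. z = Some zz \<longrightarrow> UR (aug \<delta>) So (SA S A \<beta>) qt = estA \<delta> X0 So (SA S A) \<beta>)"
  using assms(2,3)
proof (induction \<beta> arbitrary: q qt z rule: rev_induct)
  case Nil
  then have "X0 \<noteq> {}"
    by (auto simp: obs_lang_iff_estC estC_Nil)
  with Nil.prems(2) show ?case
    using tracks_supervisor_Nil UR_aug_diag[of \<delta> So "SA S A" X0] by auto
next
  case (snoc \<sigma> \<beta>)
  let ?T = "SA S A"
  have obs: "\<beta> \<in> obs_lang \<delta> X0 So ?T"
    using snoc.prems(1) obs_lang_prefix by blast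
  have \<sigma>: "\<sigma> \<in> So" "\<sigma> \<in> ?T \<beta>"
    using obs_lang_snoc_enabled[OF snoc.prems(1)] by simp_all
  obtain q1 qt1 z1 where run: "aas_run A \<beta> = (q1, qt1, z1)"
    by (cases "aas_run A \<beta>")
  note IH = snoc.IH[OF obs run]
  have upd: "(q, qt, z) = update (q1, qt1, z1) \<sigma> (A (\<beta> @ [\<sigma>]))"
    using snoc.prems(2) run by (simp add: aas_run_snoc)
  have "tracks_supervisor (gA A (\<beta> @ [\<sigma>])) q z"
    using tracks_supervisor_update[OF conjunct1[OF IH]
        attacker_output_observable[OF A vulnerable_observable snoc.prems(1)]] upd
    by (metis fst_conv snd_conv gA_snoc)
  moreover have "UR (aug \<delta>) So (?T (\<beta> @ [\<sigma>])) qt = estA \<delta> X0 So ?T (\<beta> @ [\<sigma>])" if "z = Some zz" for zz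
  proof -
    from that upd obtain zz1 where "z1 = Some zz1"
      by (cases z1) (auto simp: aas_update_None)
    with IH have "DeltaH \<xi> zz1 = ?T \<beta>" "UR (aug \<delta>) So (?T \<beta>) qt1 = estA \<delta> X0 So ?T \<beta>"
      by (auto simp: tracks_supervisor_def SA_eq[of S A \<beta>])
    then show ?thesis
      using UR_aug_update_estA[where T = ?T, OF _ _ \<sigma>] upd \<open>z1 = Some zz1\<close>
      by (metis fst_conv snd_conv)
  qed
  ultimately show ?case
    by blast
qed

lemma aas_run_Some:
  assumes "is_attacker \<delta> X0 So Sv A"
    and "\<beta> \<in> obs_lang \<delta> X0 So (SA S A)" and "aas_run A \<beta> = (q, qt, Some zz)"
  shows "stealthy_along \<delta> X0 So S A \<beta>" and "DeltaH \<xi> zz = SA S A \<beta>"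
    and "UR (aug \<delta>) So (SA S A \<beta>) qt = estA \<delta> X0 So (SA S A) \<beta>"
  using aas_run_invariant[OF assms]
  by (auto simp: tracks_supervisor_def stealthy_along_def SA_eq[of S A \<beta>])

lemma aas_run_stealthy:
  assumes "is_attacker \<delta> X0 So Sv A"
    and "\<beta> \<in> obs_lang \<delta> X0 So (SA S A)" and "stealthy_along \<delta> X0 So S A \<beta>"
  obtains q qt zz where "aas_run A \<beta> = (q, qt, Some zz)"
proof -
  obtain q qt z where run: "aas_run A \<beta> = (q, qt, z)"
    by (cases "aas_run A \<beta>")
  with aas_run_invariant[OF assms(1,2) run] assms(3) have "z \<noteq> None"
    by (simp add: tracks_supervisor_def stealthy_along_def)
  with run that show ?thesis
    by blast
qed

lemma estI_aas_run_snoc: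
  assumes "is_attacker \<delta> X0 So Sv A"
    and obs: "\<beta> @ [\<sigma>] \<in> obs_lang \<delta> X0 So (SA S A)" and run: "aas_run A \<beta> = (q, qt, Some zz)"
  shows "estI \<delta> X0 So (SA S A) (\<beta> @ [\<sigma>]) = Iof (NX (aug \<delta>) \<sigma> (UR (aug \<delta>) So (DeltaH \<xi> zz) qt))"
proof -
  let ?T = "SA S A"
  have inv: "DeltaH \<xi> zz = ?T \<beta>" "UR (aug \<delta>) So (?T \<beta>) qt = estA \<delta> X0 So ?T \<beta>"
    using aas_run_Some[OF assms(1) obs_lang_prefix[OF obs] run] by simp_all
  have \<sigma>: "\<sigma> \<in> So" "\<sigma> \<in> ?T \<beta>"
    using obs_lang_snoc_enabled[OF obs] by simp_all
  have "estI \<delta> X0 So ?T (\<beta> @ [\<sigma>]) = Iof (estA \<delta> X0 So ?T (\<beta> @ [\<sigma>]))"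
    by (simp add: Iof_estA)
  also have "\<dots> = Iof (NX (aug \<delta>) \<sigma> (estA \<delta> X0 So ?T \<beta>))"
    using UR_aug_NX_estA[where T = "SA S A", OF \<sigma>] Iof_UR_aug by metis
  finally show ?thesis
    using inv by simp
qed

lemma IS_detectable_if_positive_detection:
  assumes A: "is_attacker \<delta> X0 So Sv A" and obs: "\<beta> \<in> obs_lang \<delta> X0 So (SA S A)"
    and "leads_to_positive_detection (aas_env A \<beta>) \<sigma>"
  shows "IS_detectable \<delta> X0 So S Xsec A"
proof -
  obtain q qt zz where run: "aas_run A \<beta> = (q, qt, Some zz)"
    and enabled: "\<sigma> \<in> Oen (aug \<delta>) So qt (DeltaH \<xi> zz)"
    and secret: "Iof (NX (aug \<delta>) \<sigma> (UR (aug \<delta>) So (DeltaH \<xi> zz) qt)) \<subseteq> Xsec"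
    using assms(3) by (auto simp: leads_to_positive_detection_def aas_env_def split: prod.splits)
  note inv = aas_run_Some[OF A obs run]
  have "\<beta> @ [\<sigma>] \<in> obs_lang \<delta> X0 So (SA S A)"
    using Oen_aug_iff_obs_lang[OF inv(3)] enabled inv(2) by simp
  moreover have "\<sigma> \<in> So"
    using enabled by (simp add: Oen_iff_UR)
  ultimately show ?thesis
    unfolding IS_detectable_def using inv(1) secret estI_aas_run_snoc[OF A _ run] by blast
qed

lemma aas_env_leads_to_positive_detection:
  assumes A: "is_attacker \<delta> X0 So Sv A" and obs: "\<alpha> @ [\<sigma>] \<in> obs_lang \<delta> X0 So (SA S A)"
    and "stealthy_along \<delta> X0 So S A \<alpha>" and secret: "estI \<delta> X0 So (SA S A) (\<alpha> @ [\<sigma>]) \<subseteq> Xsec"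
  shows "leads_to_positive_detection (aas_env A \<alpha>) \<sigma>"
proof -
  obtain q qt zz where run: "aas_run A \<alpha> = (q, qt, Some zz)"
    using aas_run_stealthy[OF A obs_lang_prefix[OF obs] assms(3)] by blast
  note inv = aas_run_Some[OF A obs_lang_prefix[OF obs] run]
  show ?thesis
    using Oen_aug_iff_obs_lang[OF inv(3)] obs inv(2) secret estI_aas_run_snoc[OF A obs run] run
    by (simp add: leads_to_positive_detection_def aas_env_def)
qed

lemma aas_step_along_run:
  assumes A: "is_attacker \<delta> X0 So Sv A"
    and obs: "\<beta> @ [\<sigma>] \<in> obs_lang \<delta> X0 So (SA S A)" and run: "aas_run A \<beta> = (q, qt, Some zz)"
  shows "aas_step \<delta> So Sv \<xi> (Env q qt (Some zz)) (Ob \<sigma>) = Some (Att q qt (Some zz) \<sigma>)"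
    and "aas_step \<delta> So Sv \<xi> (Att q qt (Some zz) \<sigma>) (hat_of (A (\<beta> @ [\<sigma>]))) =
      Some (aas_env A (\<beta> @ [\<sigma>]))"
proof -
  note inv = aas_run_Some[OF A obs_lang_prefix[OF obs] run]
  show "aas_step \<delta> So Sv \<xi> (Env q qt (Some zz)) (Ob \<sigma>) = Some (Att q qt (Some zz) \<sigma>)"
    using Oen_aug_iff_obs_lang[OF inv(3)] obs inv(2) by simp
  have "hat_of (A (\<beta> @ [\<sigma>])) \<in> Vset Sv \<sigma>"
    using attacker_hat_of_in_Vset[OF A] obs clangU_subset_langG by blast
  then show "aas_step \<delta> So Sv \<xi> (Att q qt (Some zz) \<sigma>) (hat_of (A (\<beta> @ [\<sigma>]))) =
      Some (aas_env A (\<beta> @ [\<sigma>]))"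
    unfolding aas_step_Att_eq aas_env_def using run by (simp add: aas_run_snoc)
qed

end

section \<open>Single attack structures\<close>

lemma is_env_iff_not_att: "is_env s \<longleftrightarrow> \<not> is_att s"
  by (cases s) auto

definition dist_to :: "('s \<Rightarrow> 'a \<Rightarrow> 's option) \<Rightarrow> 's \<Rightarrow> 's \<Rightarrow> nat" where
  "dist_to step t q = (LEAST n. \<exists>h. length h = n \<and> deltas step q h = Some t)"

definition toward :: "('s \<Rightarrow> 'a \<Rightarrow> 's option) \<Rightarrow> 's \<Rightarrow> 's \<Rightarrow> 'a \<Rightarrow> bool" where
  "toward step t q e \<longleftrightarrow>
     (\<exists>q' h. step q e = Some q' \<and> deltas step q' h = Some t \<and> dist_to step t q' < dist_to step t q)"

lemma toward_exists:
  assumes "deltas step q h = Some t" and "q \<noteq> t"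
  shows "\<exists>e. toward step t q e"
proof -
  obtain h0 where h0: "length h0 = dist_to step t q" "deltas step q h0 = Some t"
    using LeastI_ex[of "\<lambda>n. \<exists>h. length h = n \<and> deltas step q h = Some t"] assms(1)
    unfolding dist_to_def by blast
  with assms(2) obtain e h' where "h0 = e # h'"
    by (cases h0) auto
  with h0(2) obtain q' where q': "step q e = Some q'" "deltas step q' h' = Some t"
    by (auto simp: bind_eq_Some_conv)
  then have "dist_to step t q' \<le> length h'"
    unfolding dist_to_def by (auto intro: Least_le)
  with q' h0(1) \<open>h0 = e # h'\<close> show ?thesis
    unfolding toward_def by fastforce
qed

definition choice_toward :: "('s \<Rightarrow> 'a \<Rightarrow> 's option) \<Rightarrow> 's \<Rightarrow> 's \<Rightarrow> 'a" where
  "choice_toward step t q =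
     (if \<exists>e. toward step t q e then SOME e. toward step t q e else SOME e. step q e \<noteq> None)"

lemma choice_toward_toward: "\<exists>e. toward step t q e \<Longrightarrow> toward step t q (choice_toward step t q)"
  unfolding choice_toward_def by (simp add: someI_ex)

lemma choice_toward_enabled:
  assumes "\<exists>e. step q e \<noteq> None"
  shows "step q (choice_toward step t q) \<noteq> None"
proof (cases "\<exists>e. toward step t q e")
  case True
  then show ?thesis
    using choice_toward_toward[OF True] by (auto simp: toward_def)
next
  case False
  then show ?thesis
    using someI_ex[OF assms] by (simp add: choice_toward_def)
qed

definition SAS_toward :: "(('x, 'z, 'e) mstate \<Rightarrow> 'e mevent \<Rightarrow> ('x, 'z, 'e) mstate option)
    \<Rightarrow> ('x, 'z, 'e) mstate \<Rightarrow> ('x, 'z, 'e) mstate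
    \<Rightarrow> ('x, 'z, 'e) mstate \<Rightarrow> 'e mevent \<Rightarrow> ('x, 'z, 'e) mstate option" where
  "SAS_toward step q0 t q e =
     (if q \<in> reach step q0 \<and> (is_env q \<or> e = choice_toward step t q) then step q e else None)"

lemma reach_SAS_toward_subset: "q \<in> reach (SAS_toward step q0 t) q0 \<Longrightarrow> q \<in> reach step q0"
proof (induction rule: reach.induct)
  case reach_init
  show ?case by (rule reach.reach_init)
next
  case (reach_step q e q')
  then have "step q e = Some q'"
    by (simp add: SAS_toward_def split: if_splits)
  with reach_step.IH show ?case
    by (rule reach.reach_step)
qed

lemma SAS_toward_is_SAS:
  assumes "\<And>q. is_att q \<Longrightarrow> \<exists>e. step q e \<noteq> None"
  shows "is_SAS step q0 (SAS_toward step q0 t)"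
  unfolding is_SAS_def
proof (intro conjI)
  show "\<forall>q e q'. SAS_toward step q0 t q e = Some q' \<longrightarrow> q \<in> reach step q0 \<and> step q e = Some q'"
    by (simp add: SAS_toward_def)
  show "\<forall>q\<in>reach (SAS_toward step q0 t) q0. is_att q \<longrightarrow> (\<exists>!e. SAS_toward step q0 t q e \<noteq> None)"
  proof (intro ballI impI)
    fix q
    assume "q \<in> reach (SAS_toward step q0 t) q0" and "is_att q"
    then have reach: "q \<in> reach step q0" and att: "\<not> is_env q"
      using reach_SAS_toward_subset[of q step q0 t] by (simp_all add: is_env_iff_not_att)
    have "step q (choice_toward step t q) \<noteq> None"
      using choice_toward_enabled[of step q t, OF assms[OF \<open>is_att q\<close>]] .
    show "\<exists>!e. SAS_toward step q0 t q e \<noteq> None"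
    proof (rule ex1I[of _ "choice_toward step t q"])
      show "SAS_toward step q0 t q (choice_toward step t q) \<noteq> None"
        using reach \<open>step q (choice_toward step t q) \<noteq> None\<close> by (simp add: SAS_toward_def)
    next
      fix e
      assume "SAS_toward step q0 t q e \<noteq> None"
      with att show "e = choice_toward step t q"
        by (simp add: SAS_toward_def split: if_splits)
    qed
  qed
  show "\<forall>q\<in>reach (SAS_toward step q0 t) q0. is_env q \<longrightarrow>
      (\<forall>e. step q e \<noteq> None \<longrightarrow> SAS_toward step q0 t q e = step q e)"
  proof (intro ballI impI allI)
    fix q e
    assume "q \<in> reach (SAS_toward step q0 t) q0" "is_env q"
    then show "SAS_toward step q0 t q e = step q e"
      using reach_SAS_toward_subset[of q step q0 t] by (simp add: SAS_toward_def)
  qed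
qed

lemma reach_SAS_toward:
  assumes "t \<in> reach step q0"
  shows "t \<in> reach (SAS_toward step q0 t) q0"
proof -
  let ?m = "SAS_toward step q0 t"
  have "t \<in> reach ?m q0" if "q \<in> reach ?m q0" and "deltas step q h = Some t" for q h
    using that
  proof (induction "dist_to step t q" arbitrary: q h rule: less_induct)
    case less
    show ?case
    proof (cases "q = t")
      case True
      with less.prems show ?thesis by simp
    next
      case False
      let ?e = "choice_toward step t q"
      have "toward step t q ?e"
        by (rule choice_toward_toward[OF toward_exists[OF less.prems(2) False]])
      then obtain q' h' where q': "step q ?e = Some q'" "deltas step q' h' = Some t"
        "dist_to step t q' < dist_to step t q"
        unfolding toward_def by blast
      moreover have "?m q ?e = step q ?e"
        using reach_SAS_toward_subset[OF less.prems(1)] by (simp add: SAS_toward_def)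
      ultimately have "q' \<in> reach ?m q0"
        using reach.reach_step[OF less.prems(1)] by simp
      then show ?thesis
        by (rule less.hyps[OF q'(3) _ q'(2)])
    qed
  qed
  with assms show ?thesis
    by (meson reach.reach_init reach_iff_deltas)
qed

lemma SAS_through:
  assumes "\<And>q. is_att q \<Longrightarrow> \<exists>e. step q e \<noteq> None" and "t \<in> reach step q0"
  obtains m where "is_SAS step q0 m" and "t \<in> reach m q0"
  by (rule that[OF SAS_toward_is_SAS[OF assms(1)] reach_SAS_toward[OF assms(2)]])

lemma obs_of_Nil [simp]: "obs_of [] = []"
  by (simp add: obs_of_def)

lemma obs_of_append [simp]: "obs_of (h @ h') = obs_of h @ obs_of h'"
  by (simp add: obs_of_def)

lemma obs_of_round: "x \<in> Vset Sv \<tau> \<Longrightarrow> obs_of [Ob \<sigma>, x] = [\<sigma>]"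
  by (auto simp: obs_of_def Vset_def split: if_splits)

context attack_setting
begin

lemma SAS_step_aas_step: "is_SAS ms q0 m \<Longrightarrow> m s e = Some s' \<Longrightarrow> aas_step \<delta> So Sv \<xi> s e = Some s'"
  unfolding is_SAS_def using ms_step_subset by blast

lemma SAS_path_last_round:
  assumes sas: "is_SAS ms q0 m" and h: "deltas m q0 h = Some r" and "is_env r" and "h \<noteq> []"
  obtains h' \<sigma> x q qt z where "h = h' @ [Ob \<sigma>, x]" and "obs_of h = obs_of h' @ [\<sigma>]"
    and "deltas m q0 h' = Some (Env q qt z)" and "deltas m q0 (h' @ [Ob \<sigma>]) = Some (Att q qt z \<sigma>)"
    and "m (Att q qt z \<sigma>) x = Some r" and "\<sigma> \<in> Oen (aug \<delta>) So qt (DeltaZ \<xi> z)"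
    and "x \<in> Vset Sv \<sigma>"
proof -
  obtain h1 x where h1: "h = h1 @ [x]"
    using \<open>h \<noteq> []\<close> by (cases h rule: rev_exhaust) auto
  with h obtain a where a: "deltas m q0 h1 = Some a" "m a x = Some r"
    by (auto simp: deltas_snoc bind_eq_Some_conv)
  obtain q qt z \<sigma> where a_att: "a = Att q qt z \<sigma>"
    using aas_step_EnvD SAS_step_aas_step[OF sas a(2)] \<open>is_env r\<close> by (cases a) fastforce+
  have x: "x \<in> Vset Sv \<sigma>"
    using aas_step_AttD[OF SAS_step_aas_step[OF sas a(2)[unfolded a_att]]] by simp
  have "h1 \<noteq> []"
    using a(1) a_att by (auto simp: aas_init_def)
  then obtain h' y where h': "h1 = h' @ [y]"
    by (cases h1 rule: rev_exhaust) auto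
  with a(1) obtain e where e: "deltas m q0 h' = Some e" "m e y = Some a"
    by (auto simp: deltas_snoc bind_eq_Some_conv)
  obtain q' qt' z' where e_env: "e = Env q' qt' z'"
    using SAS_step_aas_step[OF sas e(2)] a_att
    by (cases e) (auto simp del: aas_step.simps dest!: aas_step_AttD split: prod.splits)
  with aas_step_EnvD[OF SAS_step_aas_step[OF sas e(2)[unfolded e_env]]] a_att have
    "y = Ob \<sigma>" "e = Env q qt z" "\<sigma> \<in> Oen (aug \<delta>) So qt (DeltaZ \<xi> z)"
    by auto
  with that h1 h' e a a_att x show ?thesis
    using obs_of_round[OF x] by simp
qed

lemma SAS_obs_of_nonempty:
  "is_SAS ms q0 m \<Longrightarrow> deltas m q0 h = Some r \<Longrightarrow> is_env r \<Longrightarrow> h \<noteq> [] \<Longrightarrow> obs_of h \<noteq> []"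
  by (erule SAS_path_last_round) auto

lemma SAS_ext_string_unique:
  assumes sas: "is_SAS ms q0 m"
  shows "deltas m q0 h1 = Some r1 \<Longrightarrow> is_env r1 \<Longrightarrow> deltas m q0 h2 = Some r2 \<Longrightarrow> is_env r2 \<Longrightarrow>
    obs_of h1 = obs_of h2 \<Longrightarrow> h1 = h2"
proof (induction "length h1" arbitrary: h1 h2 r1 r2 rule: less_induct)
  case less
  show ?case
  proof (cases "h1 = [] \<or> h2 = []")
    case True
    with less.prems SAS_obs_of_nonempty[OF sas] show ?thesis
      by (metis obs_of_Nil)
  next
    case False
    then have "h1 \<noteq> []" "h2 \<noteq> []"
      by simp_all
    obtain h1' \<sigma>1 x1 q1 qt1 z1 where d1: "h1 = h1' @ [Ob \<sigma>1, x1]" "obs_of h1 = obs_of h1' @ [\<sigma>1]"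
      "deltas m q0 h1' = Some (Env q1 qt1 z1)" "deltas m q0 (h1' @ [Ob \<sigma>1]) = Some (Att q1 qt1 z1 \<sigma>1)"
      "m (Att q1 qt1 z1 \<sigma>1) x1 = Some r1"
      by (rule SAS_path_last_round[OF sas less.prems(1,2) \<open>h1 \<noteq> []\<close>])
    obtain h2' \<sigma>2 x2 q2 qt2 z2 where d2: "h2 = h2' @ [Ob \<sigma>2, x2]" "obs_of h2 = obs_of h2' @ [\<sigma>2]"
      "deltas m q0 h2' = Some (Env q2 qt2 z2)" "m (Att q2 qt2 z2 \<sigma>2) x2 = Some r2"
      by (rule SAS_path_last_round[OF sas less.prems(3,4) \<open>h2 \<noteq> []\<close>])
    from less.prems(5) d1(2) d2(2) have "obs_of h1' = obs_of h2'" "\<sigma>1 = \<sigma>2"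
      by simp_all
    with less.hyps d1(1,3) d2(3) have "h1' = h2'"
      by simp
    with d1(3) d2(3) \<open>\<sigma>1 = \<sigma>2\<close> have same_att: "Att q1 qt1 z1 \<sigma>1 = Att q2 qt2 z2 \<sigma>2"
      by simp
    have "Att q1 qt1 z1 \<sigma>1 \<in> reach m q0"
      using d1(4) reach_iff_deltas by metis
    with sas have "\<exists>!e. m (Att q1 qt1 z1 \<sigma>1) e \<noteq> None"
      unfolding is_SAS_def by auto
    with d1(5) d2(4) same_att have "x1 = x2"
      by auto
    with d1(1) d2(1) \<open>h1' = h2'\<close> \<open>\<sigma>1 = \<sigma>2\<close> show ?thesis
      by simp
  qed
qed

lemma induced_snoc:
  assumes sas: "is_SAS ms q0 m" and h: "deltas m q0 (h' @ [Ob \<sigma>, x]) = Some r" "is_env r"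
    and x: "x \<in> Vset Sv \<sigma>"
  shows "induced m q0 (obs_of h' @ [\<sigma>]) = hat_val x"
proof -
  let ?h = "h' @ [Ob \<sigma>, x]"
  have obs: "obs_of ?h = obs_of h' @ [\<sigma>]"
    using obs_of_round[OF x] by simp
  have ext: "?h \<in> ext_strings m q0"
    using h by (auto simp: ext_strings_def)
  have "(THE g. g \<in> ext_strings m q0 \<and> obs_of g = obs_of h' @ [\<sigma>]) = ?h"
  proof (rule the_equality)
    show "?h \<in> ext_strings m q0 \<and> obs_of ?h = obs_of h' @ [\<sigma>]"
      using ext obs by simp
  next
    fix g
    assume "g \<in> ext_strings m q0 \<and> obs_of g = obs_of h' @ [\<sigma>]"
    then show "g = ?h"
      using SAS_ext_string_unique[OF sas] h obs by (auto simp: ext_strings_def)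
  qed
  with ext obs show ?thesis
    unfolding induced_def by auto
qed

lemma induced_is_attacker:
  assumes sas: "is_SAS ms q0 m"
  shows "is_attacker \<delta> X0 So Sv (induced m q0)"
proof -
  have "induced m q0 (\<alpha> @ [\<sigma>]) = Some \<sigma> \<or> (\<exists>x\<in>Vset Sv \<sigma>. induced m q0 (\<alpha> @ [\<sigma>]) = hat_val x)"
    for \<alpha> \<sigma>
  proof (cases "\<exists>h\<in>ext_strings m q0. obs_of h = \<alpha> @ [\<sigma>]")
    case True
    then obtain h r where h: "deltas m q0 h = Some r" "is_env r" "obs_of h = \<alpha> @ [\<sigma>]"
      by (auto simp: ext_strings_def)
    then have "h \<noteq> []"
      by auto
    then obtain h' \<tau> x where "h = h' @ [Ob \<tau>, x]" "obs_of h = obs_of h' @ [\<tau>]" "x \<in> Vset Sv \<tau>"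
      by (rule SAS_path_last_round[OF sas h(1,2)])
    with h induced_snoc[OF sas] show ?thesis
      by (metis butlast_snoc last_snoc)
  qed (simp add: induced_def)
  then show ?thesis
    unfolding is_attacker_def by (fastforce simp: induced_def Vset_def split: if_splits)
qed

lemma SAS_aas_run:
  assumes sas: "is_SAS ms q0 m"
  shows "deltas m q0 h = Some (Env q qt z) \<Longrightarrow>
    aas_run (induced m q0) (obs_of h) = (q, qt, z) \<and>
    (qt \<noteq> {} \<longrightarrow> obs_of h \<in> obs_lang \<delta> X0 So (SA S (induced m q0)))"
proof (induction "length h" arbitrary: h q qt z rule: less_induct)
  case less
  let ?A = "induced m q0"
  show ?case
  proof (cases "h = []")
    case True
    with less.prems have "q = X0" "qt = {(x, x) | x. x \<in> X0}" "z = Some z0"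
      by (auto simp: aas_init_def)
    moreover have "[] \<in> obs_lang \<delta> X0 So (SA S ?A)" if "X0 \<noteq> {}"
      using that by (simp add: obs_lang_iff_estC estC_Nil)
    ultimately show ?thesis
      using True by auto
  next
    case False
    obtain h' \<sigma> x q1 qt1 z1 where h: "h = h' @ [Ob \<sigma>, x]" "obs_of h = obs_of h' @ [\<sigma>]"
      and h': "deltas m q0 h' = Some (Env q1 qt1 z1)"
      and last: "m (Att q1 qt1 z1 \<sigma>) x = Some (Env q qt z)"
      and enabled: "\<sigma> \<in> Oen (aug \<delta>) So qt1 (DeltaZ \<xi> z1)" and x: "x \<in> Vset Sv \<sigma>"
      by (rule SAS_path_last_round[OF sas less.prems _ False]) simp
    obtain zz where "z1 = Some zz" and "qt1 \<noteq> {}"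
      using Oen_DeltaZ_nonempty[OF enabled] by blast
    with less.hyps[of h'] h h' have run: "aas_run ?A (obs_of h') = (q1, qt1, Some zz)"
      and obs: "obs_of h' \<in> obs_lang \<delta> X0 So (SA S ?A)"
      by auto
    note inv = aas_run_Some[OF induced_is_attacker[OF sas] obs run]
    have "obs_of h \<in> obs_lang \<delta> X0 So (SA S ?A)"
      using Oen_aug_iff_obs_lang[OF inv(3)] enabled inv(2) \<open>z1 = Some zz\<close> h(2) by simp
    moreover have "?A (obs_of h' @ [\<sigma>]) = hat_val x"
      using induced_snoc[OF sas _ _ x] less.prems h(1) by simp
    moreover have "update (q1, qt1, z1) \<sigma> (hat_val x) = (q, qt, z)"
      using aas_step_AttD[OF SAS_step_aas_step[OF sas last]] by (auto split: prod.splits)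
    ultimately show ?thesis
      using run h(2) \<open>z1 = Some zz\<close> by (simp add: aas_run_snoc)
  qed
qed

lemma SAS_IS_detectable:
  assumes sas: "is_SAS ms q0 m" and "s \<in> reach m q0" and detect: "leads_to_positive_detection s \<sigma>"
  shows "IS_detectable \<delta> X0 So S Xsec (induced m q0)"
proof -
  obtain h where h: "deltas m q0 h = Some s"
    using assms(2) reach_iff_deltas by metis
  obtain q qt zz where s: "s = Env q qt (Some zz)" and "\<sigma> \<in> Oen (aug \<delta>) So qt (DeltaH \<xi> zz)"
    using detect by (auto simp: leads_to_positive_detection_def)
  then have "qt \<noteq> {}"
    using Oen_DeltaZ_nonempty[of \<sigma> "aug \<delta>" So qt \<xi> "Some zz"] by simp
  with SAS_aas_run[OF sas] h s have "aas_env (induced m q0) (obs_of h) = s"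
    and "obs_of h \<in> obs_lang \<delta> X0 So (SA S (induced m q0))"
    by (auto simp: aas_env_def)
  with detect show ?thesis
    using IS_detectable_if_positive_detection[OF induced_is_attacker[OF sas]] by metis
qed

section \<open>Reaching positive detection in the simplified structure\<close>

lemma stopped_run_positively_detected:
  assumes A: "is_attacker \<delta> X0 So Sv A"
    and obs: "\<beta> @ \<gamma> \<in> obs_lang \<delta> X0 So (SA S A)"
    and secret: "estI \<delta> X0 So (SA S A) (\<beta> @ \<gamma>) \<subseteq> Xsec"
    and run: "aas_run A \<beta> = (q, qt, Some zz)"
    and stop: "Qdet Xsec (Env q qt (Some zz) :: ('x, 'z, 'e) mstate) \<or>
      Qud \<delta> So \<xi> Xsec (Env q qt (Some zz))"
  shows "Iof qt \<subseteq> Xsec"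
proof -
  let ?T = "SA S A"
  note inv = aas_run_Some[OF A obs_lang_prefix[OF obs] run]
  have Iof: "Iof qt = estI \<delta> X0 So ?T \<beta>"
    using inv(3) Iof_UR_aug Iof_estA by metis
  have nonempty: "estI \<delta> X0 So ?T (\<beta> @ \<gamma>) \<noteq> {}"
    using obs estI_nonempty_iff_obs_lang by blast
  have "\<not> Qud \<delta> So \<xi> Xsec (Env q qt (Some zz))"
  proof
    assume "Qud \<delta> So \<xi> Xsec (Env q qt (Some zz))"
    with inv(2,3) have "\<forall>(x0, x)\<in>estA \<delta> X0 So ?T \<beta>. x0 \<in> Xsec \<longrightarrow>
        (\<exists>x0'. (x0', x) \<in> estA \<delta> X0 So ?T \<beta> \<and> x0' \<notin> Xsec)"
      by simp
    with secret nonempty show False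
      using secret_twins_prevent_detection[of \<delta> X0 So ?T \<beta> Xsec \<gamma>] by blast
  qed
  with stop have "Iof qt \<subseteq> Xsec \<or> Iof qt \<inter> Xsec = {}"
    unfolding Qdet.simps by blast
  moreover have "estI \<delta> X0 So ?T (\<beta> @ \<gamma>) \<subseteq> Iof qt"
    using Iof estI_append_subset by metis
  ultimately show ?thesis
    using secret nonempty by blast
qed

lemma aas_run_continue_or_detect:
  assumes A: "is_attacker \<delta> X0 So Sv A"
    and obs: "\<beta> @ \<sigma> # \<gamma> \<in> obs_lang \<delta> X0 So (SA S A)"
    and secret: "estI \<delta> X0 So (SA S A) (\<beta> @ \<sigma> # \<gamma>) \<subseteq> Xsec"
    and run: "aas_run A \<beta> = (q, qt, Some zz)"
    and reach: "Env q qt (Some zz) \<in> reach ms q0"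
  shows "leads_to_positive_detection (Env q qt (Some zz)) \<sigma> \<or> aas_env A (\<beta> @ [\<sigma>]) \<in> reach ms q0"
proof -
  have obs1: "\<beta> @ [\<sigma>] \<in> obs_lang \<delta> X0 So (SA S A)"
    using obs obs_lang_prefix[of "\<beta> @ [\<sigma>]" \<gamma>] by simp
  note inv = aas_run_Some[OF A obs_lang_prefix[OF obs1] run]
  show ?thesis
  proof (cases "Qdet Xsec (Env q qt (Some zz) :: ('x, 'z, 'e) mstate) \<or>
      Qud \<delta> So \<xi> Xsec (Env q qt (Some zz))")
    case False
    have "ms (Env q qt (Some zz)) e = aas_step \<delta> So Sv \<xi> (Env q qt (Some zz)) e" for e
      by (rule ms_step_eq_aas_step) (rule False)
    then have "ms (Env q qt (Some zz)) (Ob \<sigma>) = Some (Att q qt (Some zz) \<sigma>)"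
      and "ms (Att q qt (Some zz) \<sigma>) (hat_of (A (\<beta> @ [\<sigma>]))) = Some (aas_env A (\<beta> @ [\<sigma>]))"
      using aas_step_along_run[OF A obs1 run] by simp_all
    with reach have "aas_env A (\<beta> @ [\<sigma>]) \<in> reach ms q0"
      by (meson reach.reach_step)
    then show ?thesis ..
  next
    case True
    then have "Iof qt \<subseteq> Xsec"
      using stopped_run_positively_detected[OF A obs secret run] by blast
    then have "Iof (NX (aug \<delta>) \<sigma> (UR (aug \<delta>) So (DeltaH \<xi> zz) qt)) \<subseteq> Xsec"
      using Iof_NX_aug_subset[of \<delta> \<sigma> "UR (aug \<delta>) So (DeltaH \<xi> zz) qt"] by simp
    moreover have "\<sigma> \<in> Oen (aug \<delta>) So qt (DeltaH \<xi> zz)"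
      using Oen_aug_iff_obs_lang[OF inv(3)] obs1 inv(2) by simp
    ultimately show ?thesis
      by (auto simp: leads_to_positive_detection_def)
  qed
qed

lemma aas_env_reachable_or_detect:
  assumes A: "is_attacker \<delta> X0 So Sv A" and obs: "\<alpha> @ [\<sigma>] \<in> obs_lang \<delta> X0 So (SA S A)"
    and stealthy: "stealthy_along \<delta> X0 So S A \<alpha>"
    and secret: "estI \<delta> X0 So (SA S A) (\<alpha> @ [\<sigma>]) \<subseteq> Xsec"
  shows "\<beta> @ \<gamma> = \<alpha> \<Longrightarrow>
    (\<exists>s \<sigma>'. s \<in> reach ms q0 \<and> leads_to_positive_detection s \<sigma>') \<or> aas_env A \<beta> \<in> reach ms q0"
proof (induction \<beta> arbitrary: \<gamma> rule: rev_induct)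
  case Nil
  show ?case
    by (simp add: aas_env_def aas_init_def reach.reach_init)
next
  case (snoc \<tau> \<beta>)
  then have prefix: "\<beta> @ \<tau> # \<gamma> = \<alpha>"
    by simp
  with obs secret have obs': "\<beta> @ \<tau> # \<gamma> @ [\<sigma>] \<in> obs_lang \<delta> X0 So (SA S A)"
    and secret': "estI \<delta> X0 So (SA S A) (\<beta> @ \<tau> # \<gamma> @ [\<sigma>]) \<subseteq> Xsec"
    by auto
  obtain q qt zz where run: "aas_run A \<beta> = (q, qt, Some zz)"
    using aas_run_stealthy[OF A obs_lang_prefix[OF obs'] stealthy_along_prefix] stealthy prefix
    by blast
  then have "aas_env A \<beta> = Env q qt (Some zz)"
    by (simp add: aas_env_def)
  then show ?case
    using snoc.IH[OF prefix] aas_run_continue_or_detect[OF A obs' secret' run] by metis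
qed

lemma positive_detection_reachable:
  assumes A: "is_attacker \<delta> X0 So Sv A" and "IS_detectable \<delta> X0 So S Xsec A"
  obtains s \<sigma> where "s \<in> reach ms q0" and "leads_to_positive_detection s \<sigma>"
proof -
  obtain \<alpha> \<sigma> where obs: "\<alpha> @ [\<sigma>] \<in> obs_lang \<delta> X0 So (SA S A)"
    and stealthy: "stealthy_along \<delta> X0 So S A \<alpha>"
    and secret: "estI \<delta> X0 So (SA S A) (\<alpha> @ [\<sigma>]) \<subseteq> Xsec"
    using assms(2) unfolding IS_detectable_def by blast
  with that aas_env_reachable_or_detect[OF A obs stealthy secret, of \<alpha> "[]"]
    aas_env_leads_to_positive_detection[OF A obs stealthy secret]
  show ?thesis
    by auto
qed

end

theorem theorem2:
  fixes \<delta> :: "'x::finite \<Rightarrow> 'e::finite \<Rightarrow> 'x option"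
    and X0 Xsec :: "'x set"
    and So Suc_ev Sv :: "'e set"
    and S :: "'e list \<Rightarrow> 'e set"
    and \<xi> :: "'z::finite \<Rightarrow> 'e \<Rightarrow> 'z option"
    and z0 :: 'z
  assumes "is_supervisor \<delta> X0 So Suc_ev S"
    and "realizes \<delta> X0 So S \<xi> z0"
    and "Xsec \<subseteq> X0"
    and "Sv \<subseteq> So"
  shows "IS_attackable \<delta> X0 So Sv S Xsec \<longleftrightarrow>
         (\<exists>m. is_SAS (ms_step \<delta> So Sv \<xi> Xsec) (aas_init X0 z0) m \<and>
              IS_detectable \<delta> X0 So S Xsec (induced m (aas_init X0 z0)))"
proof -
  interpret attack_setting \<delta> X0 Xsec So Sv S \<xi> z0
    using assms(2,4) by unfold_locales
  show ?thesis
  proof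
    assume "IS_attackable \<delta> X0 So Sv S Xsec"
    then obtain A where "is_attacker \<delta> X0 So Sv A" "IS_detectable \<delta> X0 So S Xsec A"
      unfolding IS_attackable_def by blast
    then obtain s \<sigma> where "s \<in> reach ms q0" "leads_to_positive_detection s \<sigma>"
      by (rule positive_detection_reachable)
    moreover obtain m where "is_SAS ms q0 m" "s \<in> reach m q0"
      using SAS_through[OF ms_step_att_enabled \<open>s \<in> reach ms q0\<close>] by blast
    ultimately show "\<exists>m. is_SAS ms q0 m \<and> IS_detectable \<delta> X0 So S Xsec (induced m q0)"
      using SAS_IS_detectable by blast
  next
    assume "\<exists>m. is_SAS ms q0 m \<and> IS_detectable \<delta> X0 So S Xsec (induced m q0)"
    then show "IS_attackable \<delta> X0 So Sv S Xsec"
      unfolding IS_attackable_def using induced_is_attacker by blast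
  qed
qed

end
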